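(* Let $(W_1,S_1)$ and $(W_2,S_2)$ be irreducible Coxeter systems with Coxeter matrices $m^{(1)}$ and $m^{(2)}$, and suppose there is an injective map $\varphi:S_1\to S_2$ such that $m^{(1)}_{st}\le m^{(2)}_{\varphi(s)\varphi(t)}$ for all $s\neq t$ in $S_1$ (with the convention $k\le\infty$ for all $k$). Then $|W^{FC}_{1,l}|\le|W^{FC}_{2,l}|$ for all $l\ge0$, where $W^{FC}_{i,l}$ is the set of fully commutative elements of length $l$ in $W_i$.
   Context: Coxeter system $(W,S)$: finite $S$, symmetric $(m_{st})$ with $m_{ss}=1$, $m_{st}\in\{2,3,\dots\}\cup\{\infty\}$ for $s\neq t$, $W=\langle S\mid (st)^{m_{st}}=1,\ m_{st}<\infty\rangle$; length $\ell$ and reduced expressions as usual. $w$ is fully commutative if any two reduced expressions of $w$ are related by repeatedly swapping adjacent letters $s,t$ with $m_{st}=2$. Irreducible: the Coxeter graph (vertices $S$, edges $\{s,t\}$ with $m_{st}\ge3$) is connected. *)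

theory Defs
  imports Main "HOL-Library.Extended_Nat"
begin

definition coxeter_matrix :: "'a set \<Rightarrow> ('a \<Rightarrow> 'a \<Rightarrow> enat) \<Rightarrow> bool" where
  "coxeter_matrix S m \<longleftrightarrow> finite S \<and> (\<forall>s\<in>S. m s s = 1)
     \<and> (\<forall>s\<in>S. \<forall>t\<in>S. m s t = m t s)
     \<and> (\<forall>s\<in>S. \<forall>t\<in>S. s \<noteq> t \<longrightarrow> 2 \<le> m s t)"

text \<open>Irreducible: the Coxeter graph (edges s,t with m_st >= 3) is connected.\<close>
definition coxeter_irreducible :: "'a set \<Rightarrow> ('a \<Rightarrow> 'a \<Rightarrow> enat) \<Rightarrow> bool" where
  "coxeter_irreducible S m \<longleftrightarrow>
     (\<forall>s\<in>S. \<forall>t\<in>S. (s, t) \<in> {(u, v). u \<in> S \<and> v \<in> S \<and> u \<noteq> v \<and> 3 \<le> m u v}\<^sup>*)"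

fun alt_word :: "'a \<Rightarrow> 'a \<Rightarrow> nat \<Rightarrow> 'a list" where
  "alt_word s t 0 = []"
| "alt_word s t (Suc n) = s # alt_word t s n"

text \<open>One step: insertion of a defining relator (st)^(m_st), m_st finite
  (for s = t this is the relator s s).\<close>
definition relator_insert :: "'a set \<Rightarrow> ('a \<Rightarrow> 'a \<Rightarrow> enat) \<Rightarrow> 'a list \<Rightarrow> 'a list \<Rightarrow> bool" where
  "relator_insert S m u v \<longleftrightarrow> (\<exists>x y s t k. s \<in> S \<and> t \<in> S \<and> m s t = enat k
       \<and> u = x @ y \<and> v = x @ alt_word s t (2 * k) @ y)"

text \<open>Two words over S represent the same element of W iff related by
  insertions/deletions of defining relators.\<close>
definition coxeter_equiv :: "'a set \<Rightarrow> ('a \<Rightarrow> 'a \<Rightarrow> enat) \<Rightarrow> 'a list \<Rightarrow> 'a list \<Rightarrow> bool" where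
  "coxeter_equiv S m = (\<lambda>u v. relator_insert S m u v \<or> relator_insert S m v u)\<^sup>*\<^sup>*"

text \<open>Elements of W are the equivalence classes of words over S.\<close>
definition cox_elem :: "'a set \<Rightarrow> ('a \<Rightarrow> 'a \<Rightarrow> enat) \<Rightarrow> 'a list \<Rightarrow> 'a list set" where
  "cox_elem S m w = {v. coxeter_equiv S m w v}"

definition coxeter_group :: "'a set \<Rightarrow> ('a \<Rightarrow> 'a \<Rightarrow> enat) \<Rightarrow> 'a list set set" where
  "coxeter_group S m = cox_elem S m ` lists S"

definition cox_length :: "'a list set \<Rightarrow> nat" where
  "cox_length X = (LEAST n. \<exists>v\<in>X. length v = n)"

definition reduced_exprs :: "'a list set \<Rightarrow> 'a list set" where
  "reduced_exprs X = {v \<in> X. length v = cox_length X}"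

definition comm_move :: "('a \<Rightarrow> 'a \<Rightarrow> enat) \<Rightarrow> 'a list \<Rightarrow> 'a list \<Rightarrow> bool" where
  "comm_move m u v \<longleftrightarrow> (\<exists>x y s t. m s t = 2 \<and> u = x @ [s, t] @ y \<and> v = x @ [t, s] @ y)"

definition fully_commutative :: "('a \<Rightarrow> 'a \<Rightarrow> enat) \<Rightarrow> 'a list set \<Rightarrow> bool" where
  "fully_commutative m X \<longleftrightarrow>
     (\<forall>u\<in>reduced_exprs X. \<forall>v\<in>reduced_exprs X. (comm_move m)\<^sup>*\<^sup>* u v)"

definition fc_elements :: "'a set \<Rightarrow> ('a \<Rightarrow> 'a \<Rightarrow> enat) \<Rightarrow> nat \<Rightarrow> 'a list set set" where
  "fc_elements S m l = {X \<in> coxeter_group S m. fully_commutative m X \<and> cox_length X = l}"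

end

theory Submission
  imports Defs Complex_Main
begin

text \<open>By Stembridge's criterion, an element is fully commutative iff no word commutation
  equivalent to one of its reduced words contains a square \<open>ss\<close> or a braid \<open>sts\<cdots>\<close> of
  length \<open>m\<^sub>s\<^sub>t \<ge> 3\<close>; its reduced words then form a single commutation class. The
  criterion transfers along \<open>\<phi>\<close>: a commutation of \<open>\<phi>(s) \<phi>(t)\<close> lifts because
  \<open>2 \<le> m\<^sub>s\<^sub>t \<le> m(\<phi>(s), \<phi>(t)) = 2\<close>, and a forbidden factor in the image pulls back
  to a square or to an alternating factor of length \<open>\<ge> m\<^sub>s\<^sub>t\<close>, which is forbidden up
  to one commutation. Mapping a reduced word letterwise thus sends the fully commutative
  elements of length \<open>l\<close> of \<open>W\<^sub>1\<close> injectively to those of \<open>W\<^sub>2\<close>.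

  The criterion itself rests on the exchange condition, obtained by counting reflections
  with parity, and on \<open>(st)\<^sup>d \<noteq> 1\<close> for \<open>0 < d < m\<^sub>s\<^sub>t\<close>, obtained from the geometric
  representation.\<close>

section \<open>Alternating words\<close>

lemma length_alt_word [simp]: "length (alt_word a b n) = n"
  by (induction n arbitrary: a b) auto

lemma set_alt_word: "set (alt_word a b n) \<subseteq> {a, b}"
  by (induction n arbitrary: a b) auto

lemma alt_word_in_lists: "a \<in> A \<Longrightarrow> b \<in> A \<Longrightarrow> alt_word a b n \<in> lists A"
  using set_alt_word[of a b n] by auto

lemma alt_word_add:
  "alt_word a b (p + q) = alt_word a b p @ (if even p then alt_word a b q else alt_word b a q)"
  by (induction p arbitrary: a b) auto

lemma alt_word_Suc_snoc: "alt_word a b (Suc n) = alt_word a b n @ [if even n then a else b]"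
  using alt_word_add[of a b n 1] by (auto simp: numeral_eq_Suc)

lemma rev_alt_word: "rev (alt_word a b n) = (if even n then alt_word b a n else alt_word a b n)"
proof (induction n arbitrary: a b)
  case (Suc n)
  then show ?case
    using alt_word_Suc_snoc[of a b n] alt_word_Suc_snoc[of b a n] by auto
qed simp

lemma drop_alt_word:
  "drop j (alt_word a b n) = (if even j then alt_word a b (n - j) else alt_word b a (n - j))"
proof (induction j arbitrary: a b n)
  case (Suc j) then show ?case by (cases n) auto
qed simp

lemma map_alt_word: "map f (alt_word a b n) = alt_word (f a) (f b) n"
  by (induction n arbitrary: a b) auto

lemma alt_word_filter_pair: "filter (\<lambda>c. c = a \<or> c = b) (alt_word a b n) = alt_word a b n"
  using set_alt_word[of a b n] by (auto simp: filter_id_conv)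

section \<open>Words modulo the Coxeter relations\<close>

lemma equivclp_invariant:
  assumes "equivclp r u v" and "\<And>x y. r x y \<Longrightarrow> f x = f y"
  shows "f u = f v"
  using assms(1) by induction (auto dest: assms(2))

lemma equivclp_map:
  assumes "equivclp r u v" and "\<And>x y. r x y \<Longrightarrow> r (f x) (f y)"
  shows "equivclp r (f u) (f v)"
  using assms(1) by induction (auto intro: equivclp_into_equivclp dest: assms(2))

lemma coxeter_equiv_eq_equivclp: "coxeter_equiv S m = equivclp (relator_insert S m)"
  by (simp add: coxeter_equiv_def equivclp_def symclp_def[abs_def])

locale coxeter_system =
  fixes S :: "'a set" and m :: "'a \<Rightarrow> 'a \<Rightarrow> enat"
  assumes coxeter_matrix: "coxeter_matrix S m"
begin

abbreviation eqv :: "'a list \<Rightarrow> 'a list \<Rightarrow> bool" where "eqv \<equiv> coxeter_equiv S m"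
abbreviation elem :: "'a list \<Rightarrow> 'a list set" where "elem \<equiv> cox_elem S m"

lemma finite_S: "finite S"
  and m_diag: "s \<in> S \<Longrightarrow> m s s = 1"
  and m_sym: "s \<in> S \<Longrightarrow> t \<in> S \<Longrightarrow> m s t = m t s"
  and m_ge_2: "s \<in> S \<Longrightarrow> t \<in> S \<Longrightarrow> s \<noteq> t \<Longrightarrow> 2 \<le> m s t"
  using coxeter_matrix unfolding coxeter_matrix_def by auto

lemma eqv_refl [simp]: "eqv u u"
  and eqv_sym [sym]: "eqv u v \<Longrightarrow> eqv v u"
  and eqv_trans [trans]: "eqv u v \<Longrightarrow> eqv v w \<Longrightarrow> eqv u w"
  unfolding coxeter_equiv_eq_equivclp by (auto intro: equivclp_sym equivclp_trans)

lemma eqv_invariant: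
  assumes "eqv u v" and "\<And>x y s t k. s \<in> S \<Longrightarrow> t \<in> S \<Longrightarrow> m s t = enat k \<Longrightarrow>
      f (x @ y) = f (x @ alt_word s t (2 * k) @ y)"
  shows "f u = f v"
  using assms(1) unfolding coxeter_equiv_eq_equivclp
  by (rule equivclp_invariant) (auto simp: relator_insert_def intro: assms(2))

lemma eqv_append_cong:
  assumes "eqv u v"
  shows "eqv (x @ u @ y) (x @ v @ y)"
proof -
  have step: "relator_insert S m (x @ a @ y) (x @ b @ y)" if "relator_insert S m a b" for a b
    using that unfolding relator_insert_def by (metis append.assoc)
  show ?thesis
    using assms unfolding coxeter_equiv_eq_equivclp by (rule equivclp_map) (rule step)
qed

lemma eqv_append: "eqv u v \<Longrightarrow> eqv u' v' \<Longrightarrow> eqv (u @ u') (v @ v')"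
  using eqv_append_cong[of u v "[]" u'] eqv_append_cong[of u' v' v "[]"] by (auto intro: eqv_trans)

lemma eqv_relator: "s \<in> S \<Longrightarrow> t \<in> S \<Longrightarrow> m s t = enat k \<Longrightarrow> eqv (alt_word s t (2 * k)) []"
  unfolding coxeter_equiv_eq_equivclp relator_insert_def
  by (rule converse_r_into_equivclp) (metis append_Nil append_Nil2)

lemma eqv_double: "a \<in> S \<Longrightarrow> eqv [a, a] []"
  using eqv_relator[of a a 1] m_diag[of a] by (simp add: one_enat_def numeral_eq_Suc)

lemma eqv_append_rev: "w \<in> lists S \<Longrightarrow> eqv (w @ rev w) []"
proof (induction w)
  case (Cons a w)
  have "eqv ([a] @ (w @ rev w) @ [a]) ([a] @ [] @ [a])"
    using Cons by (intro eqv_append_cong) auto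
  then show ?case using eqv_double[of a] Cons.prems by (auto intro: eqv_trans)
qed simp

lemma eqv_rev_append: "w \<in> lists S \<Longrightarrow> eqv (rev w @ w) []"
  using eqv_append_rev[of "rev w"] by (simp add: in_lists_conv_set)

lemma eqv_cancel_left:
  assumes "c \<in> lists S" and "eqv (c @ u) (c @ v)"
  shows "eqv u v"
proof -
  have "eqv u (rev c @ c @ u)"
    using eqv_append[OF eqv_rev_append[OF assms(1)] eqv_refl[of u]] by (simp add: eqv_sym)
  also have "eqv \<dots> (rev c @ c @ v)" using eqv_append_cong[OF assms(2), of "rev c" "[]"] by simp
  also have "eqv \<dots> v" using eqv_append[OF eqv_rev_append[OF assms(1)] eqv_refl[of v]] by simp
  finally show ?thesis .
qed

lemma eqv_cancel_right:
  assumes "c \<in> lists S" and "eqv (u @ c) (v @ c)"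
  shows "eqv u v"
proof -
  have "eqv u (u @ c @ rev c)"
    using eqv_append[OF eqv_refl[of u] eqv_append_rev[OF assms(1)]] by (simp add: eqv_sym)
  also have "eqv \<dots> (v @ c @ rev c)" using eqv_append_cong[OF assms(2), of "[]" "rev c"] by simp
  also have "eqv \<dots> v" using eqv_append[OF eqv_refl[of v] eqv_append_rev[OF assms(1)]] by simp
  finally show ?thesis .
qed

lemma eqv_move_right:
  assumes "c \<in> lists S" and "eqv (u @ c) v"
  shows "eqv u (v @ rev c)"
proof -
  have "eqv u (u @ c @ rev c)"
    using eqv_append[OF eqv_refl[of u] eqv_append_rev[OF assms(1)]] by (simp add: eqv_sym)
  also have "eqv \<dots> (v @ rev c)" using eqv_append_cong[OF assms(2), of "[]" "rev c"] by simp
  finally show ?thesis .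
qed

lemma eqv_lists: "eqv u v \<Longrightarrow> u \<in> lists S \<Longrightarrow> v \<in> lists S"
proof -
  assume "eqv u v" "u \<in> lists S"
  moreover have "eqv u v \<Longrightarrow> (u \<in> lists S) = (v \<in> lists S)"
    by (rule eqv_invariant) (auto dest: alt_word_in_lists)
  ultimately show ?thesis by blast
qed

lemma eqv_even_length: "eqv u v \<Longrightarrow> even (length u) = even (length v)"
  by (rule eqv_invariant) auto

lemma eqv_braid: "s \<in> S \<Longrightarrow> t \<in> S \<Longrightarrow> m s t = enat k \<Longrightarrow> eqv (alt_word s t k) (alt_word t s k)"
proof -
  assume st: "s \<in> S" "t \<in> S" "m s t = enat k"
  define c where "c = (if even k then alt_word s t k else alt_word t s k)"
  have "eqv (alt_word s t k @ c) []"
    using eqv_relator[OF st] by (simp add: c_def mult_2 alt_word_add)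
  moreover have "c \<in> lists S" using st by (simp add: c_def alt_word_in_lists)
  ultimately have "eqv (alt_word s t k) (rev c)" using eqv_move_right by fastforce
  then show ?thesis by (cases "even k") (simp_all add: c_def rev_alt_word)
qed

lemma elem_eq_iff: "elem u = elem v \<longleftrightarrow> eqv u v"
  unfolding cox_elem_def by (auto intro: eqv_trans eqv_sym)

end

section \<open>Reflections and reduced words\<close>

text \<open>The entries represent the reflections \<open>s\<^sub>n \<cdots> s\<^sub>i\<^sub>+\<^sub>1 s\<^sub>i s\<^sub>i\<^sub>+\<^sub>1 \<cdots> s\<^sub>n\<close>,
  \<open>i = 1, \<dots>, n\<close>, of \<open>w = s\<^sub>1 \<cdots> s\<^sub>n\<close>.\<close>
fun refl_words :: "'a list \<Rightarrow> 'a list list" where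
  "refl_words [] = []"
| "refl_words (a # w) = (rev w @ a # w) # refl_words w"

lemma length_refl_words [simp]: "length (refl_words w) = length w"
  by (induction w) auto

lemma refl_words_append: "refl_words (x @ y) = map (\<lambda>r. rev y @ r @ y) (refl_words x) @ refl_words y"
  by (induction x) auto

lemma nth_refl_words: "j < length w \<Longrightarrow> refl_words w ! j = rev (drop j w) @ drop (Suc j) w"
proof (induction w arbitrary: j)
  case (Cons a w) then show ?case by (cases j) auto
qed simp

lemma nth_refl_words_alt_word:
  assumes "j < n"
  shows "refl_words (alt_word a b n) ! j =
    (if odd n then alt_word a b (2 * (n - 1 - j) + 1) else alt_word b a (2 * (n - 1 - j) + 1))"
proof -
  define L where "L = n - 1 - j"
  have L: "n - 1 - j = L" "n - j = Suc L" "n - Suc j = L" and parity: "even n \<longleftrightarrow> odd (L + j)"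
    using assms by (auto simp: L_def)
  have "rev (alt_word c d (Suc L)) @ alt_word d c L
      = (if even L then alt_word c d (2 * L + 1) else alt_word d c (2 * L + 1))" for c d
    using alt_word_add[of c d "Suc L" L] alt_word_add[of d c "Suc L" L] rev_alt_word[of c d "Suc L"]
    by (auto simp: mult_2 simp del: alt_word.simps)
  from this[of a b] this[of b a] show ?thesis
    using assms parity by (auto simp: nth_refl_words drop_alt_word L simp del: alt_word.simps)
qed

lemma length_filter_list_all2:
  "list_all2 (\<lambda>a b. P a = Q b) xs ys \<Longrightarrow> length (filter P xs) = length (filter Q ys)"
  by (induction rule: list_all2_induct) auto

lemma filter_eq_singleton_distinct: "distinct xs \<Longrightarrow> c \<in> set xs \<Longrightarrow> filter (\<lambda>x. x = c) xs = [c]"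
  by (induction xs) (auto simp: filter_empty_conv)

context coxeter_system
begin

definition refl_count :: "'a list \<Rightarrow> 'a list \<Rightarrow> nat" where
  "refl_count w t = length (filter (\<lambda>r. eqv r t) (refl_words w))"

text \<open>In the reflection list of a relator \<open>(st)\<^sup>k\<close>, entries \<open>j\<close> and \<open>k + j\<close>
  represent the same reflection, so every reflection occurs an even number of times.\<close>
lemma even_count_refl_words_relator:
  assumes st: "s \<in> S" "t \<in> S" "m s t = enat k"
    and P: "\<And>a b. eqv a b \<Longrightarrow> P a = P b"
  shows "even (length (filter P (refl_words (alt_word s t (2 * k)))))"
proof -
  let ?rs = "refl_words (alt_word s t (2 * k))"
  have pair: "eqv (?rs ! j) (?rs ! (k + j))" if "j < k" for j
  proof -
    have "2 * (2 * k - 1 - j) + 1 = 2 * k + (2 * (k - 1 - j) + 1)" using that by simp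
    then have "?rs ! j = alt_word t s (2 * k) @ ?rs ! (k + j)"
      using that alt_word_add[of t s "2 * k" "2 * (k - 1 - j) + 1"]
      by (simp add: nth_refl_words_alt_word del: alt_word.simps)
    moreover have "eqv (alt_word t s (2 * k)) []" using eqv_relator[of t s k] st m_sym by simp
    ultimately show ?thesis using eqv_append[OF _ eqv_refl] by fastforce
  qed
  have "list_all2 (\<lambda>a b. P a = P b) (take k ?rs) (drop k ?rs)"
  proof (rule list_all2_all_nthI)
    fix j assume "j < length (take k ?rs)"
    then show "P (take k ?rs ! j) = P (drop k ?rs ! j)" using P pair by simp
  qed simp
  then have "length (filter P (take k ?rs)) = length (filter P (drop k ?rs))"
    by (rule length_filter_list_all2)
  then show ?thesis by (metis append_take_drop_id filter_append length_append even_add)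
qed

lemma even_refl_count_relator:
  assumes st: "s \<in> S" "t \<in> S" "m s t = enat k"
  shows "even (refl_count (x @ alt_word s t (2 * k) @ y) r) = even (refl_count (x @ y) r)"
proof -
  define z where "z = alt_word s t (2 * k)"
  have z: "eqv z []" unfolding z_def using eqv_relator st by simp
  have rev_z: "eqv (rev z) []"
    unfolding z_def using eqv_relator[of t s k] st m_sym by (simp add: rev_alt_word)
  have "eqv (rev y @ rev z @ q @ z @ y) (rev y @ q @ y)" for q
    using eqv_append[OF eqv_refl eqv_append[OF rev_z eqv_append[OF eqv_refl eqv_append[OF z eqv_refl]]]]
    by simp
  then have "list_all2 (\<lambda>a b. eqv a r = eqv b r)
      (map (\<lambda>q. rev (z @ y) @ q @ z @ y) (refl_words x)) (map (\<lambda>q. rev y @ q @ y) (refl_words x))"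
    by (intro list_all2_all_nthI) (auto intro: eqv_trans eqv_sym)
  then have outer: "length (filter (\<lambda>q. eqv q r) (map (\<lambda>q. rev (z @ y) @ q @ z @ y) (refl_words x)))
      = length (filter (\<lambda>q. eqv q r) (map (\<lambda>q. rev y @ q @ y) (refl_words x)))"
    by (rule length_filter_list_all2)
  have inner: "even (length (filter (\<lambda>q. eqv (rev y @ q @ y) r) (refl_words z)))"
    unfolding z_def using st
    by (rule even_count_refl_words_relator) (meson eqv_append_cong eqv_sym eqv_trans)
  show ?thesis
    using outer inner unfolding refl_count_def z_def[symmetric]
    by (simp add: refl_words_append comp_def)
qed

lemma even_refl_count_eqv: "eqv u v \<Longrightarrow> even (refl_count u r) = even (refl_count v r)"
  by (erule eqv_invariant) (rule even_refl_count_relator[symmetric])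

definition odd_refls :: "'a list \<Rightarrow> 'a list set set" where
  "odd_refls w = {elem t | t. odd (refl_count w t)}"

lemma odd_refls_eqv: "eqv u v \<Longrightarrow> odd_refls u = odd_refls v"
  unfolding odd_refls_def by (simp add: even_refl_count_eqv)

lemma odd_refls_subset: "odd_refls w \<subseteq> elem ` set (refl_words w)"
proof
  fix c assume "c \<in> odd_refls w"
  then obtain t where t: "c = elem t" "odd (refl_count w t)" unfolding odd_refls_def by auto
  then have "filter (\<lambda>r. eqv r t) (refl_words w) \<noteq> []" unfolding refl_count_def by auto
  then obtain r where "r \<in> set (refl_words w)" "eqv r t" by (auto simp: filter_empty_conv)
  then show "c \<in> elem ` set (refl_words w)" using t elem_eq_iff by auto
qed

lemma card_odd_refls_le: "card (odd_refls w) \<le> length w"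
proof -
  have "card (odd_refls w) \<le> card (elem ` set (refl_words w))"
    by (rule card_mono[OF _ odd_refls_subset]) simp
  also have "\<dots> \<le> length w"
    using card_image_le[of "set (refl_words w)" elem] card_length[of "refl_words w"] by simp
  finally show ?thesis .
qed

lemma card_odd_refls_distinct:
  assumes d: "distinct (map elem (refl_words w))"
  shows "card (odd_refls w) = length w"
proof -
  have "elem r \<in> odd_refls w" if r: "r \<in> set (refl_words w)" for r
  proof -
    have "map elem (filter (\<lambda>q. eqv q r) (refl_words w)) = filter (\<lambda>x. x = elem r) (map elem (refl_words w))"
      by (simp add: filter_map comp_def elem_eq_iff)
    also have "\<dots> = [elem r]"
      using d r by (intro filter_eq_singleton_distinct) auto
    finally have "length (map elem (filter (\<lambda>q. eqv q r) (refl_words w))) = 1"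
      by simp
    then have "refl_count w r = 1"
      unfolding refl_count_def by simp
    then show ?thesis unfolding odd_refls_def by auto
  qed
  then have "odd_refls w = elem ` set (refl_words w)"
    using odd_refls_subset by blast
  then show ?thesis using distinct_card[OF d] by simp
qed

definition reduced :: "'a list \<Rightarrow> bool" where
  "reduced w \<longleftrightarrow> (\<forall>u. eqv w u \<longrightarrow> length w \<le> length u)"

lemma reduced_if_distinct_refls: "distinct (map elem (refl_words w)) \<Longrightarrow> reduced w"
  unfolding reduced_def
  by (metis card_odd_refls_distinct card_odd_refls_le odd_refls_eqv)

lemma reduced_eqv: "reduced w \<Longrightarrow> eqv w u \<Longrightarrow> length u = length w \<Longrightarrow> reduced u"
  unfolding reduced_def by (metis eqv_sym eqv_trans)

lemma reduced_eqv_length: "reduced w \<Longrightarrow> reduced u \<Longrightarrow> eqv w u \<Longrightarrow> length u = length w"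
  unfolding reduced_def by (meson eqv_sym antisym)

lemma not_reduced_snoc_eqv_snoc:
  assumes "a \<in> S" "eqv w (u @ [a])" "length u < length w"
  shows "\<not> reduced (w @ [a])"
proof -
  have "eqv (w @ [a]) (u @ [a, a] @ [])" using eqv_append[OF assms(2) eqv_refl] by simp
  also have "eqv \<dots> (u @ [] @ [])" using eqv_append_cong[OF eqv_double[OF assms(1)]] .
  finally show ?thesis using assms(3) unfolding reduced_def by fastforce
qed

text \<open>Equal reflections at the letters \<open>a\<close> and \<open>b\<close> mean \<open>a y b = y\<close> in \<open>W\<close>.\<close>
lemma eqv_delete_pair:
  assumes l: "x @ [a] @ y @ [b] @ z \<in> lists S"
    and h: "eqv (rev (y @ [b] @ z) @ [a] @ y @ [b] @ z) (rev z @ [b] @ z)"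
  shows "eqv (x @ [a] @ y @ [b] @ z) (x @ y @ z)"
proof -
  have S: "rev z \<in> lists S" "z \<in> lists S" "[b] \<in> lists S" "y \<in> lists S" using l by auto
  have "eqv (rev z @ ([b] @ rev y @ [a] @ y @ [b]) @ z) (rev z @ [b] @ z)" using h by simp
  then have "eqv ([b] @ rev y @ [a] @ y @ [b]) [b]"
    using eqv_cancel_right[OF S(2)] eqv_cancel_left[OF S(1)] by blast
  then have "eqv ([b] @ rev y @ [a] @ y @ [b]) ([b] @ [])" by simp
  then have "eqv (rev y @ [a] @ y @ [b]) []" by (rule eqv_cancel_left[OF S(3)])
  then have "eqv ((y @ rev y) @ [a] @ y @ [b]) y"
    using eqv_append_cong[of _ "[]" y "[]"] by simp
  moreover have "eqv ((y @ rev y) @ [a] @ y @ [b]) ([] @ [a] @ y @ [b])"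
    by (intro eqv_append eqv_append_rev S eqv_refl)
  ultimately have "eqv ([a] @ y @ [b]) y"
    by (metis append_Nil eqv_sym eqv_trans)
  then show ?thesis using eqv_append_cong by fastforce
qed

lemma eqv_delete_indices:
  assumes l: "w \<in> lists S" and ij: "i < j" "j < length w"
    and h: "eqv (refl_words w ! i) (refl_words w ! j)"
  shows "eqv w (take i w @ take (j - Suc i) (drop (Suc i) w) @ drop (Suc j) w)"
proof -
  define x y z where "x = take i w" and "y = take (j - Suc i) (drop (Suc i) w)"
    and "z = drop (Suc j) w"
  define a b where "a = w ! i" and "b = w ! j"
  have dj: "drop j w = b # z" unfolding b_def z_def using ij by (simp add: Cons_nth_drop_Suc)
  have "drop (Suc i) w = y @ drop j w"
    using ij append_take_drop_id[of "j - Suc i" "drop (Suc i) w"] by (simp add: y_def)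
  then have dsi: "drop (Suc i) w = y @ [b] @ z" using dj by simp
  then have di: "drop i w = a # y @ [b] @ z"
    using ij Cons_nth_drop_Suc[of i w] unfolding a_def by simp
  then have w: "w = x @ [a] @ y @ [b] @ z"
    unfolding x_def by (metis append_Cons append_Nil append_take_drop_id)
  have "refl_words w ! i = rev (y @ [b] @ z) @ [a] @ y @ [b] @ z"
    using ij di dsi by (simp add: nth_refl_words)
  moreover have "refl_words w ! j = rev z @ [b] @ z"
    using ij dj by (simp add: nth_refl_words z_def)
  ultimately have "eqv (x @ [a] @ y @ [b] @ z) (x @ y @ z)"
    using l h unfolding w by (intro eqv_delete_pair) simp_all
  then show ?thesis
    using w unfolding x_def y_def z_def by simp
qed

lemma distinct_refls_if_reduced:
  assumes "w \<in> lists S" "reduced w"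
  shows "distinct (map elem (refl_words w))"
proof (rule ccontr)
  assume "\<not> distinct (map elem (refl_words w))"
  then obtain i j where ij: "i < j" "j < length w" "elem (refl_words w ! i) = elem (refl_words w ! j)"
    unfolding distinct_conv_nth by (auto simp: nat_neq_iff)
  then have "eqv w (take i w @ take (j - Suc i) (drop (Suc i) w) @ drop (Suc j) w)"
    using eqv_delete_indices[OF assms(1)] elem_eq_iff by blast
  moreover have "length (take i w @ take (j - Suc i) (drop (Suc i) w) @ drop (Suc j) w) < length w"
    using ij by simp
  ultimately show False using assms(2) unfolding reduced_def by fastforce
qed

lemma exchange_condition:
  assumes l: "w \<in> lists S" "a \<in> S" and r: "reduced w" and nr: "\<not> reduced (w @ [a])"
  shows "\<exists>i < length w. eqv (w @ [a]) (take i w @ drop (Suc i) w)"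
proof -
  have refls: "refl_words (w @ [a]) = map (\<lambda>q. [a] @ q @ [a]) (refl_words w) @ [[a]]"
    by (simp add: refl_words_append)
  have "distinct (map elem (map (\<lambda>q. [a] @ q @ [a]) (refl_words w)))"
  proof -
    have "eqv p q" if "eqv ([a] @ p @ [a]) ([a] @ q @ [a])" for p q
      using that l eqv_cancel_left[of "[a]"] eqv_cancel_right[of "[a]" p q] by auto
    moreover have "distinct (refl_words w)" "inj_on elem (set (refl_words w))"
      using distinct_refls_if_reduced[OF l(1) r] by (simp_all add: distinct_map)
    ultimately show ?thesis
      by (auto simp: distinct_map inj_on_def elem_eq_iff)
  qed
  moreover have "\<not> distinct (map elem (refl_words (w @ [a])))"
    using nr reduced_if_distinct_refls by blast
  ultimately obtain i where i: "i < length w" "elem ([a] @ refl_words w ! i @ [a]) = elem [a]"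
    unfolding refls by (auto simp: in_set_conv_nth)
  then have "eqv (refl_words (w @ [a]) ! i) (refl_words (w @ [a]) ! length w)"
    unfolding refls by (simp add: nth_append elem_eq_iff)
  then have "eqv (w @ [a]) (take i (w @ [a]) @ take (length w - Suc i) (drop (Suc i) (w @ [a]))
      @ drop (Suc (length w)) (w @ [a]))"
    using eqv_delete_indices[of "w @ [a]" i "length w"] l i by simp
  then show ?thesis using i by auto
qed

end

section \<open>The dihedral subgroup in the geometric representation\<close>

text \<open>If \<open>z = (B(e\<^sub>s, v), B(e\<^sub>t, v))\<close> and \<open>b = B(e\<^sub>s, e\<^sub>t)\<close>, then \<open>rot_coords b z\<close>
  are the same coordinates of \<open>\<sigma>\<^sub>s \<sigma>\<^sub>t v\<close>.\<close>
definition rot_coords :: "real \<Rightarrow> real \<times> real \<Rightarrow> real \<times> real" where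
  "rot_coords b z = (2 * snd z * b - fst z, - snd z - 2 * (fst z - 2 * snd z * b) * b)"

fun lucas_U :: "real \<Rightarrow> nat \<Rightarrow> real" where
  "lucas_U \<tau> 0 = 0"
| "lucas_U \<tau> (Suc 0) = 1"
| "lucas_U \<tau> (Suc (Suc n)) = \<tau> * lucas_U \<tau> (Suc n) - lucas_U \<tau> n"

lemma rot_coords_linear:
  "rot_coords b (\<alpha> * fst x + \<beta> * fst y, \<alpha> * snd x + \<beta> * snd y)
    = (\<alpha> * fst (rot_coords b x) + \<beta> * fst (rot_coords b y), \<alpha> * snd (rot_coords b x) + \<beta> * snd (rot_coords b y))"
  unfolding rot_coords_def by (simp add: algebra_simps)

text \<open>Cayley--Hamilton for the matrix of \<open>rot_coords b\<close>, whose trace is \<open>4 b\<^sup>2 - 2\<close>.\<close>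
lemma rot_coords_twice:
  "rot_coords b (rot_coords b z) =
    ((4 * b\<^sup>2 - 2) * fst (rot_coords b z) - fst z, (4 * b\<^sup>2 - 2) * snd (rot_coords b z) - snd z)"
  unfolding rot_coords_def by (simp add: algebra_simps power2_eq_square)

lemma rot_coords_pow:
  "(rot_coords b ^^ Suc n) z =
    (lucas_U (4 * b\<^sup>2 - 2) (Suc n) * fst (rot_coords b z) - lucas_U (4 * b\<^sup>2 - 2) n * fst z,
     lucas_U (4 * b\<^sup>2 - 2) (Suc n) * snd (rot_coords b z) - lucas_U (4 * b\<^sup>2 - 2) n * snd z)"
proof (induction n)
  case (Suc n)
  define \<tau> where "\<tau> = 4 * b\<^sup>2 - 2"
  have "(rot_coords b ^^ Suc (Suc n)) z
      = rot_coords b (lucas_U \<tau> (Suc n) * fst (rot_coords b z) + (- lucas_U \<tau> n) * fst z,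
                      lucas_U \<tau> (Suc n) * snd (rot_coords b z) + (- lucas_U \<tau> n) * snd z)"
    using Suc by (simp add: \<tau>_def)
  also have "\<dots> = (lucas_U \<tau> (Suc n) * fst (rot_coords b (rot_coords b z)) + (- lucas_U \<tau> n) * fst (rot_coords b z),
                   lucas_U \<tau> (Suc n) * snd (rot_coords b (rot_coords b z)) + (- lucas_U \<tau> n) * snd (rot_coords b z))"
    by (rule rot_coords_linear)
  also have "\<dots> = (lucas_U \<tau> (Suc (Suc n)) * fst (rot_coords b z) - lucas_U \<tau> (Suc n) * fst z,
                   lucas_U \<tau> (Suc (Suc n)) * snd (rot_coords b z) - lucas_U \<tau> (Suc n) * snd z)"
    unfolding rot_coords_twice \<tau>_def[symmetric] by (simp add: algebra_simps)
  finally show ?case unfolding \<tau>_def .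
qed simp

lemma lucas_U_cos: "lucas_U (2 * cos \<phi>) n * sin \<phi> = sin (real n * \<phi>)"
proof -
  have sin_Suc_Suc: "sin (real (Suc (Suc n)) * \<phi>) = 2 * cos \<phi> * sin (real (Suc n) * \<phi>) - sin (real n * \<phi>)" for n
  proof -
    have angles: "real (Suc (Suc n)) * \<phi> = real (Suc n) * \<phi> + \<phi>" "real n * \<phi> = real (Suc n) * \<phi> - \<phi>"
      by (simp_all add: algebra_simps)
    show ?thesis unfolding angles sin_add sin_diff by (simp add: algebra_simps)
  qed
  have "lucas_U (2 * cos \<phi>) n * sin \<phi> = sin (real n * \<phi>) \<and>
      lucas_U (2 * cos \<phi>) (Suc n) * sin \<phi> = sin (real (Suc n) * \<phi>)"
  proof (induction n)
    case (Suc n)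
    then show ?case using sin_Suc_Suc[of n] by (simp add: algebra_simps)
  qed simp
  then show ?thesis ..
qed

lemma cos_pi_div_squared_less_1:
  assumes "2 \<le> k" shows "(cos (pi / real k))\<^sup>2 < 1"
proof -
  have sin_pos: "0 < sin (pi / real k)" using assms by (intro sin_gt_zero) (auto simp: field_simps)
  then show ?thesis
    using sin_squared_eq[of "pi / real k"] mult_pos_pos[OF sin_pos sin_pos]
    by (simp add: power2_eq_square)
qed

lemma cos_double_neg_cos: "4 * (- cos x)\<^sup>2 - 2 = 2 * cos (2 * x :: real)"
  by (simp add: cos_double_cos)

lemma cos_neq_1_between: "0 < x \<Longrightarrow> x < 2 * pi \<Longrightarrow> cos x \<noteq> 1"
proof
  assume x: "0 < x" "x < 2 * pi" and "cos x = 1"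
  then obtain n :: int where n: "x = real_of_int n * (2 * pi)" using cos_one_2pi_int by auto
  then have "0 < real_of_int n" "real_of_int n < 1" using x by (simp_all add: zero_less_mult_iff)
  then show False by simp
qed

lemma rot_coords_period:
  assumes k: "2 \<le> k" and b: "b = - cos (pi / real k)"
  shows "(rot_coords b ^^ k) z = z"
proof (cases "k = 2")
  case True
  then show ?thesis using b by (simp add: rot_coords_def numeral_eq_Suc)
next
  case False
  define \<phi> where "\<phi> = 2 * (pi / real k)"
  obtain k' where k': "k = Suc k'" using k by (cases k) auto
  have "0 < \<phi>" "\<phi> < pi" using k False by (auto simp: \<phi>_def field_simps)
  then have sin_\<phi>: "sin \<phi> \<noteq> 0" using sin_gt_zero by fastforce
  have \<tau>: "4 * b\<^sup>2 - 2 = 2 * cos \<phi>" unfolding b \<phi>_def by (rule cos_double_neg_cos)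
  have k\<phi>: "real k * \<phi> = 2 * pi" using k by (simp add: \<phi>_def)
  then have "lucas_U (2 * cos \<phi>) k = 0" using lucas_U_cos[of \<phi> k] sin_\<phi> by simp
  moreover have "real k' * \<phi> = 2 * pi - \<phi>" using k\<phi> k' by (simp add: algebra_simps)
  then have "sin (real k' * \<phi>) = - sin \<phi>" by (simp add: sin_diff)
  then have "(lucas_U (2 * cos \<phi>) k' + 1) * sin \<phi> = 0"
    using lucas_U_cos[of \<phi> k'] by (simp add: algebra_simps)
  then have "lucas_U (2 * cos \<phi>) k' = -1" using sin_\<phi> by simp
  ultimately show ?thesis using rot_coords_pow[where b=b and n=k' and z=z] unfolding \<tau> k' by simp
qed

lemma rot_coords_orbit_sums:
  fixes b :: real and d :: nat and z :: "real \<times> real"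
  defines "P \<equiv> (\<Sum>i<d. fst ((rot_coords b ^^ i) z))" and "Q \<equiv> (\<Sum>i<d. snd ((rot_coords b ^^ i) z))"
  shows "fst ((rot_coords b ^^ d) z) = fst z + 2 * b * Q - 2 * P"
    and "snd ((rot_coords b ^^ d) z) = snd z + (4 * b\<^sup>2 - 2) * Q - 2 * b * P"
proof -
  define p q where "p i = fst ((rot_coords b ^^ i) z)" and "q i = snd ((rot_coords b ^^ i) z)" for i
  have shift: "f d = f 0 + (\<Sum>i<d. f (Suc i)) - (\<Sum>i<d. f i)" for f :: "nat \<Rightarrow> real"
    using sum.lessThan_Suc_shift[of f d] by simp
  have "(\<Sum>i<d. p (Suc i)) = (\<Sum>i<d. 2 * b * q i - p i)"
    by (simp add: p_def q_def rot_coords_def mult_ac)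
  then show "fst ((rot_coords b ^^ d) z) = fst z + 2 * b * Q - 2 * P"
    using shift[of p] by (simp add: P_def Q_def p_def q_def sum_subtractf sum_distrib_left sum_negf)
  have "(\<Sum>i<d. q (Suc i)) = (\<Sum>i<d. (4 * b\<^sup>2 - 1) * q i - 2 * b * p i)"
    by (simp add: p_def q_def rot_coords_def algebra_simps power2_eq_square)
  also have "\<dots> = (4 * b\<^sup>2 - 1) * Q - 2 * b * P"
    by (simp add: P_def Q_def p_def q_def sum_subtractf sum_distrib_left)
  finally have "q d = q 0 + (4 * b\<^sup>2 - 2) * Q - 2 * b * P"
    using shift[of q] by (simp add: Q_def q_def algebra_simps)
  then show "snd ((rot_coords b ^^ d) z) = snd z + (4 * b\<^sup>2 - 2) * Q - 2 * b * P"
    by (simp add: q_def)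
qed

lemma rot_coords_orbit_sums_zero:
  assumes "2 \<le> k" and b: "b = - cos (pi / real k)"
  shows "(\<Sum>i<k. fst ((rot_coords b ^^ i) z)) = 0" and "(\<Sum>i<k. snd ((rot_coords b ^^ i) z)) = 0"
proof -
  define P Q where "P = (\<Sum>i<k. fst ((rot_coords b ^^ i) z))" and "Q = (\<Sum>i<k. snd ((rot_coords b ^^ i) z))"
  have "2 * b * Q - 2 * P = 0" "(4 * b\<^sup>2 - 2) * Q - 2 * b * P = 0"
    using rot_coords_orbit_sums[of k b z] rot_coords_period[OF assms, of z]
    by (simp_all add: P_def Q_def)
  then have P: "P = b * Q" and "(4 * b\<^sup>2 - 2) * Q - 2 * b * (b * Q) = 0" by simp_all
  then have "(b\<^sup>2 - 1) * Q = 0" by (simp add: algebra_simps power2_eq_square)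
  moreover have "b\<^sup>2 \<noteq> 1" using cos_pi_div_squared_less_1[OF assms(1)] b by simp
  ultimately have "Q = 0" by simp
  with P show "P = 0" "Q = 0" by simp_all
qed

lemma rot_coords_fixed_if_orbit_sums_zero:
  assumes "(\<Sum>i<d. fst ((rot_coords b ^^ i) z)) = 0" and "(\<Sum>i<d. snd ((rot_coords b ^^ i) z)) = 0"
  shows "(rot_coords b ^^ d) z = z"
  using rot_coords_orbit_sums[of d b z] assms by (simp add: prod_eq_iff)

lemma rot_coords_no_fixed_axis:
  assumes k: "2 \<le> k" and b: "b = - cos (pi / real k)" and d: "0 < d" "d < k" and c: "c \<noteq> 0"
  shows "(rot_coords b ^^ d) (0, c) \<noteq> (0, c)"
proof (cases "k = 2")
  case True
  then have "d = 1" using d by simp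
  then show ?thesis using b c True by (simp add: rot_coords_def)
next
  case False
  with k have k: "3 \<le> k" by simp
  show ?thesis
  proof
    assume fixed: "(rot_coords b ^^ d) (0, c) = (0, c)"
    define \<phi> where "\<phi> = 2 * (pi / real k)"
    obtain d' where d': "d = Suc d'" using d by (cases d) auto
    have \<phi>: "0 < \<phi>" "\<phi> < pi" using k by (auto simp: \<phi>_def field_simps)
    then have sin_\<phi>: "sin \<phi> \<noteq> 0" using sin_gt_zero by fastforce
    have \<tau>: "4 * b\<^sup>2 - 2 = 2 * cos \<phi>" unfolding b \<phi>_def by (rule cos_double_neg_cos)
    have "pi / real k < pi / 2" using k by (intro divide_strict_left_mono) auto
    then have "0 < cos (pi / real k)" using k by (intro cos_gt_zero) auto
    then have "b \<noteq> 0" using b by simp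
    let ?U = "lucas_U (2 * cos \<phi>)"
    have "(?U (Suc d') * fst (rot_coords b (0, c)) - ?U d' * fst (0::real, c),
           ?U (Suc d') * snd (rot_coords b (0, c)) - ?U d' * snd (0::real, c)) = (0, c)"
      using fixed unfolding d' rot_coords_pow \<tau> .
    then have "?U d * (2 * c * b) = 0" and "?U d * (4 * c * b\<^sup>2 - c) - ?U d' * c = c"
      unfolding d' by (simp_all add: rot_coords_def algebra_simps power2_eq_square)
    then have "?U d = 0" and "(?U d' + 1) * c = 0"
      using c \<open>b \<noteq> 0\<close> by (auto simp: algebra_simps)
    then have "?U d = 0" and "?U d' = -1"
      using c by simp_all
    then have "sin (real d * \<phi>) = 0" "sin (real d' * \<phi>) = - sin \<phi>"
      using lucas_U_cos[of \<phi> d] lucas_U_cos[of \<phi> d'] by simp_all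
    moreover have "real d' * \<phi> = real d * \<phi> - \<phi>" using d' by (simp add: algebra_simps)
    ultimately have "cos (real d * \<phi>) = 1" using sin_\<phi> by (simp add: sin_diff)
    moreover have "0 < real d * \<phi>" "real d * \<phi> < 2 * pi" using d \<phi> by (auto simp: \<phi>_def field_simps)
    ultimately show False using cos_neq_1_between by blast
  qed
qed

context coxeter_system
begin

text \<open>The geometric representation on \<open>S \<Rightarrow> real\<close>: \<open>tits_form s v = B(e\<^sub>s, v)\<close> for the Tits form
  \<open>B(e\<^sub>s, e\<^sub>u) = tits_coeff s u\<close>, and \<open>tits_refl s\<close> is the reflection \<open>\<sigma>\<^sub>s\<close>.\<close>
definition tits_coeff :: "'a \<Rightarrow> 'a \<Rightarrow> real" where
  "tits_coeff s u = (case m s u of enat k \<Rightarrow> - cos (pi / real k) | \<infinity> \<Rightarrow> -1)"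

definition tits_form :: "'a \<Rightarrow> ('a \<Rightarrow> real) \<Rightarrow> real" where
  "tits_form s v = (\<Sum>u\<in>S. tits_coeff s u * v u)"

definition tits_refl :: "'a \<Rightarrow> ('a \<Rightarrow> real) \<Rightarrow> 'a \<Rightarrow> real" where
  "tits_refl s v = (\<lambda>x. v x - (if x = s then 2 * tits_form s v else 0))"

definition sub_pair :: "'a \<Rightarrow> 'a \<Rightarrow> ('a \<Rightarrow> real) \<Rightarrow> real \<Rightarrow> real \<Rightarrow> 'a \<Rightarrow> real" where
  "sub_pair s t v \<alpha> \<beta> = (\<lambda>x. v x - (if x = s then \<alpha> else 0) - (if x = t then \<beta> else 0))"

definition tits_rot :: "'a \<Rightarrow> 'a \<Rightarrow> ('a \<Rightarrow> real) \<Rightarrow> 'a \<Rightarrow> real" where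
  "tits_rot s t = tits_refl s \<circ> tits_refl t"

lemma tits_coeff_diag: "s \<in> S \<Longrightarrow> tits_coeff s s = 1"
  unfolding tits_coeff_def using m_diag[of s] by (simp add: one_enat_def)

lemma tits_coeff_sym: "s \<in> S \<Longrightarrow> u \<in> S \<Longrightarrow> tits_coeff s u = tits_coeff u s"
  unfolding tits_coeff_def using m_sym by simp

lemma tits_form_sub_pair:
  assumes "s \<in> S" "t \<in> S"
  shows "tits_form r (sub_pair s t v \<alpha> \<beta>) = tits_form r v - \<alpha> * tits_coeff r s - \<beta> * tits_coeff r t"
proof -
  have "(\<Sum>x\<in>S. tits_coeff r x * (if x = a then c else 0)) = c * tits_coeff r a" if "a \<in> S" for a c
    using that finite_S by (simp add: if_distrib[of "(*) _"] sum.delta cong: if_cong)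
  then show ?thesis
    using assms by (simp add: tits_form_def sub_pair_def algebra_simps sum_subtractf sum.distrib)
qed

lemma sub_pair_sub_pair: "sub_pair s t (sub_pair s t v \<alpha> \<beta>) \<alpha>' \<beta>' = sub_pair s t v (\<alpha> + \<alpha>') (\<beta> + \<beta>')"
  unfolding sub_pair_def by (auto simp: fun_eq_iff)

lemma sub_pair_0 [simp]: "sub_pair s t v 0 0 = v"
  unfolding sub_pair_def by simp

lemma tits_refl_left: "tits_refl s v = sub_pair s t v (2 * tits_form s v) 0"
  unfolding tits_refl_def sub_pair_def by simp

lemma tits_refl_right: "s \<noteq> t \<Longrightarrow> tits_refl t v = sub_pair s t v 0 (2 * tits_form t v)"
  unfolding tits_refl_def sub_pair_def by (auto simp: fun_eq_iff)

lemma tits_refl_involution: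
  assumes "s \<in> S"
  shows "tits_refl s (tits_refl s v) = v"
proof -
  have "tits_form s (tits_refl s v) = - tits_form s v"
    using tits_form_sub_pair[OF assms assms, of s v "2 * tits_form s v" 0] tits_coeff_diag[OF assms]
    by (simp add: tits_refl_left[of s v s])
  then show ?thesis unfolding tits_refl_def by (auto simp: fun_eq_iff)
qed

lemma tits_rot_eq_sub_pair:
  assumes st: "s \<in> S" "t \<in> S" "s \<noteq> t"
  shows "tits_rot s t v = sub_pair s t v (2 * (tits_form s v - 2 * tits_form t v * tits_coeff s t)) (2 * tits_form t v)"
proof -
  have "tits_form s (tits_refl t v) = tits_form s v - 2 * tits_form t v * tits_coeff s t"
    using tits_form_sub_pair[OF st(1,2), of s v 0 "2 * tits_form t v"] tits_refl_right[OF st(3)]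
    by simp
  then show ?thesis
    unfolding tits_rot_def comp_def tits_refl_left[of s _ t] tits_refl_right[OF st(3)] sub_pair_sub_pair
    by simp
qed

lemma tits_rot_coords:
  assumes st: "s \<in> S" "t \<in> S" "s \<noteq> t"
  shows "(tits_form s (tits_rot s t v), tits_form t (tits_rot s t v))
    = rot_coords (tits_coeff s t) (tits_form s v, tits_form t v)"
  unfolding tits_rot_eq_sub_pair[OF st] tits_form_sub_pair[OF st(1,2)] rot_coords_def
  using tits_coeff_diag st tits_coeff_sym[of t s] by (simp add: algebra_simps)

lemma tits_rot_pow_coords:
  assumes st: "s \<in> S" "t \<in> S" "s \<noteq> t"
  shows "(tits_form s ((tits_rot s t ^^ k) v), tits_form t ((tits_rot s t ^^ k) v))
    = (rot_coords (tits_coeff s t) ^^ k) (tits_form s v, tits_form t v)"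
  by (induction k) (simp_all add: tits_rot_coords[OF st])

lemma tits_rot_pow:
  fixes v :: "'a \<Rightarrow> real"
  assumes st: "s \<in> S" "t \<in> S" "s \<noteq> t"
  defines "z \<equiv> (tits_form s v, tits_form t v)" and "b \<equiv> tits_coeff s t"
  shows "(tits_rot s t ^^ k) v = sub_pair s t v
    (2 * (\<Sum>i<k. fst ((rot_coords b ^^ i) z)) - 4 * b * (\<Sum>i<k. snd ((rot_coords b ^^ i) z)))
    (2 * (\<Sum>i<k. snd ((rot_coords b ^^ i) z)))"
proof (induction k)
  case (Suc k)
  have "(tits_rot s t ^^ Suc k) v = tits_rot s t ((tits_rot s t ^^ k) v)" by simp
  also have "\<dots> = sub_pair s t ((tits_rot s t ^^ k) v)
      (2 * fst ((rot_coords b ^^ k) z) - 4 * b * snd ((rot_coords b ^^ k) z)) (2 * snd ((rot_coords b ^^ k) z))"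
    using tits_rot_pow_coords[OF st, of k v] unfolding tits_rot_eq_sub_pair[OF st] z_def b_def
    by (simp add: prod_eq_iff algebra_simps)
  finally show ?case unfolding Suc sub_pair_sub_pair by (simp add: algebra_simps)
qed simp

lemma foldr_tits_refl_alt_word: "foldr tits_refl (alt_word s t (2 * k)) v = (tits_rot s t ^^ k) v"
proof (induction k arbitrary: v)
  case (Suc k)
  have "alt_word s t (2 * Suc k) = s # t # alt_word s t (2 * k)" by (simp add: numeral_2_eq_2)
  then show ?case using Suc by (simp add: tits_rot_def)
qed simp

lemma foldr_tits_refl_relator:
  assumes st: "s \<in> S" "t \<in> S" "m s t = enat k"
  shows "foldr tits_refl (alt_word s t (2 * k)) v = v"
proof (cases "s = t")
  case True
  then have "k = 1" using m_diag[of s] st by (simp add: one_enat_def)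
  then show ?thesis using True tits_refl_involution st by (simp add: numeral_2_eq_2)
next
  case False
  have "2 \<le> k" using m_ge_2[OF st(1,2) False] st by (simp add: numeral_eq_enat)
  moreover have "tits_coeff s t = - cos (pi / real k)" using st by (simp add: tits_coeff_def)
  ultimately show ?thesis
    using rot_coords_orbit_sums_zero
    unfolding foldr_tits_refl_alt_word tits_rot_pow[OF st(1,2) False] by simp
qed

lemma foldr_tits_refl_eqv: "eqv u w \<Longrightarrow> foldr tits_refl u = foldr tits_refl w"
  by (erule eqv_invariant) (simp add: fun_eq_iff foldr_tits_refl_relator)

lemma tits_rot_pow_fixed_orbit_sums:
  assumes st: "s \<in> S" "t \<in> S" "s \<noteq> t" and fixed: "(tits_rot s t ^^ d) v = v"
  defines "z \<equiv> (tits_form s v, tits_form t v)" and "b \<equiv> tits_coeff s t"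
  shows "(\<Sum>i<d. fst ((rot_coords b ^^ i) z)) = 0" and "(\<Sum>i<d. snd ((rot_coords b ^^ i) z)) = 0"
proof -
  define P Q where "P = (\<Sum>i<d. fst ((rot_coords b ^^ i) z))" and "Q = (\<Sum>i<d. snd ((rot_coords b ^^ i) z))"
  have v: "sub_pair s t v (2 * P - 4 * b * Q) (2 * Q) = v"
    using tits_rot_pow[OF st, where v=v and k=d] fixed unfolding P_def Q_def z_def b_def by simp
  show "Q = 0" using fun_cong[OF v, of t] st unfolding sub_pair_def by simp
  then show "P = 0" using fun_cong[OF v, of s] st unfolding sub_pair_def by simp
qed

text \<open>The vector \<open>e\<^sub>s\<close> (if \<open>m\<^sub>s\<^sub>t = \<infinity>\<close>), respectively \<open>e\<^sub>t - b e\<^sub>s\<close> with \<open>b = B(e\<^sub>s, e\<^sub>t)\<close>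
  (if \<open>m\<^sub>s\<^sub>t\<close> is finite), is not fixed by \<open>(\<sigma>\<^sub>s \<sigma>\<^sub>t)\<^sup>d\<close>.\<close>
lemma not_eqv_alt_word_Nil:
  assumes st: "s \<in> S" "t \<in> S" "s \<noteq> t" and d: "0 < d" "enat d < m s t"
  shows "\<not> eqv (alt_word s t (2 * d)) []"
proof
  assume "eqv (alt_word s t (2 * d)) []"
  then have "(tits_rot s t ^^ d) v = v" for v
    using foldr_tits_refl_eqv foldr_tits_refl_alt_word by (metis foldr.simps(1) id_apply)
  note sums = tits_rot_pow_fixed_orbit_sums[OF st this]
  define b where "b = tits_coeff s t"
  have b_sym: "tits_coeff t s = b" using tits_coeff_sym st by (simp add: b_def)
  show False
  proof (cases "m s t")
    case infinity
    define v where "v = sub_pair s t (\<lambda>_. 0) (-1) 0"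
    have "b = -1" using infinity by (simp add: b_def tits_coeff_def)
    then have "(tits_form s v, tits_form t v) = (1, -1)"
      unfolding v_def tits_form_sub_pair[OF st(1,2)] using tits_coeff_diag st b_sym
      by (simp add: tits_form_def b_def)
    moreover have "(rot_coords (-1) ^^ i) (1, -1) = (1, -1)" for i
      by (induction i) (simp_all add: rot_coords_def)
    ultimately show False
      using sums(2)[of v] d \<open>b = -1\<close> by (simp add: b_def)
  next
    case (enat k)
    define v where "v = sub_pair s t (\<lambda>_. 0) b (-1)"
    have coords: "(tits_form s v, tits_form t v) = (0, 1 - b\<^sup>2)"
      unfolding v_def tits_form_sub_pair[OF st(1,2)] using tits_coeff_diag st b_sym
      by (simp add: tits_form_def b_def power2_eq_square)
    have "2 \<le> k" using m_ge_2[OF st] enat by (simp add: numeral_eq_enat)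
    moreover have "b = - cos (pi / real k)" using enat by (simp add: b_def tits_coeff_def)
    moreover have "1 - b\<^sup>2 \<noteq> 0" using cos_pi_div_squared_less_1[OF \<open>2 \<le> k\<close>] calculation(2) by simp
    moreover have "(rot_coords b ^^ d) (0, 1 - b\<^sup>2) = (0, 1 - b\<^sup>2)"
      using rot_coords_fixed_if_orbit_sums_zero sums[of v] coords by (simp add: b_def)
    ultimately show False
      using rot_coords_no_fixed_axis[of k b d "1 - b\<^sup>2"] d enat by simp
  qed
qed

section \<open>Reduced words with two right descents\<close>

lemma reduced_alt_word:
  assumes st: "s \<in> S" "t \<in> S" "s \<noteq> t" and k: "enat k \<le> m s t"
  shows "reduced (alt_word s t k)"
proof -
  define a b where "a = (if odd k then s else t)" and "b = (if odd k then t else s)"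
  have ab: "a \<in> S" "b \<in> S" "a \<noteq> b" "m a b = m s t" using st m_sym by (auto simp: a_def b_def)
  have refls: "refl_words (alt_word s t k) ! j = alt_word a b (2 * (k - 1 - j) + 1)" if "j < k" for j
    using nth_refl_words_alt_word[OF that, of s t] by (simp add: a_def b_def)
  have distinct: "\<not> eqv (alt_word a b (2 * p + 1)) (alt_word a b (2 * q + 1))" if "q < p" "p < k" for p q
  proof
    assume "eqv (alt_word a b (2 * p + 1)) (alt_word a b (2 * q + 1))"
    moreover have "alt_word a b (2 * p + 1) = alt_word a b (2 * (p - q)) @ alt_word a b (2 * q + 1)"
      using alt_word_add[of a b "2 * (p - q)" "2 * q + 1"] that
      by (simp add: algebra_simps del: alt_word.simps)
    moreover have "alt_word a b (2 * q + 1) \<in> lists S" using ab by (simp add: alt_word_in_lists)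
    ultimately have "eqv (alt_word a b (2 * (p - q))) []"
      using eqv_cancel_right[of "alt_word a b (2 * q + 1)" _ "[]"] by (simp del: alt_word.simps)
    moreover have "enat (p - q) < enat k" using that by simp
    then have "enat (p - q) < m a b" using k ab(4) by (metis order_less_le_trans)
    ultimately show False using not_eqv_alt_word_Nil[OF ab(1-3)] that by simp
  qed
  have "distinct (map elem (refl_words (alt_word s t k)))"
    unfolding distinct_conv_nth
  proof (intro allI impI)
    fix i j assume "i < length (map elem (refl_words (alt_word s t k)))"
      "j < length (map elem (refl_words (alt_word s t k)))" "i \<noteq> j"
    then have ij: "i < k" "j < k" "i \<noteq> j" by simp_all
    show "map elem (refl_words (alt_word s t k)) ! i \<noteq> map elem (refl_words (alt_word s t k)) ! j"
    proof (cases "i < j")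
      case True
      then show ?thesis
        using ij distinct[of "k - 1 - j" "k - 1 - i"] by (simp add: refls elem_eq_iff)
    next
      case False
      then have "k - 1 - i < k - 1 - j" "k - 1 - j < k" using ij by auto
      then show ?thesis using ij distinct by (auto simp: refls elem_eq_iff dest: eqv_sym)
    qed
  qed
  then show ?thesis by (rule reduced_if_distinct_refls)
qed

lemma eqv_cons_alt_word:
  assumes ab: "a \<in> S" "b \<in> S" "a \<noteq> b" and k: "enat k \<le> m a b" and c: "c \<in> {a, b}"
  shows "\<exists>a' b' k'. {a', b'} = {a, b} \<and> enat k' \<le> m a b \<and> eqv (c # alt_word a b k) (alt_word a' b' k')"
proof (cases k)
  case 0
  have "enat 1 \<le> m a b"
    using m_ge_2[OF ab] order_trans[of "enat 1" 2] by (simp add: numeral_eq_enat)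
  moreover have "c # alt_word a b k = alt_word c (if c = a then b else a) 1" using 0 by simp
  ultimately show ?thesis
    using c by (intro exI[of _ c] exI[of _ "if c = a then b else a"] exI[of _ 1]) auto
next
  case (Suc k')
  have k': "enat k' \<le> m a b" using k Suc order_trans[of "enat k'" "enat k"] by simp
  show ?thesis
  proof (cases "c = a")
    case True
    have "eqv ([a, a] @ alt_word b a k') ([] @ alt_word b a k')"
      using eqv_append[OF eqv_double eqv_refl] ab by blast
    then show ?thesis using True Suc k' by (intro exI[of _ b] exI[of _ a] exI[of _ k']) auto
  next
    case False
    then have b: "c = b" using c by simp
    show ?thesis
    proof (cases "enat (Suc k) \<le> m a b")
      case True
      then show ?thesis using b by (intro exI[of _ b] exI[of _ a] exI[of _ "Suc k"]) auto
    next
      case False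
      then have "m a b = enat k" using k by (cases "m a b") auto
      then have "eqv ([b] @ alt_word a b k @ []) ([b] @ alt_word b a k @ [])"
        using eqv_append_cong eqv_braid ab by blast
      also have "[b] @ alt_word b a k @ [] = [b, b] @ alt_word a b k'" using Suc by simp
      also have "eqv \<dots> ([] @ alt_word a b k')" using eqv_append[OF eqv_double eqv_refl] ab by blast
      finally show ?thesis using b k' by (intro exI[of _ a] exI[of _ b] exI[of _ k']) auto
    qed
  qed
qed

lemma eqv_alt_word_if_lists_pair:
  assumes st: "s \<in> S" "t \<in> S" "s \<noteq> t" and z: "z \<in> lists {s, t}"
  shows "\<exists>a b k. {a, b} = {s, t} \<and> enat k \<le> m s t \<and> eqv z (alt_word a b k)"
  using z
proof (induction z)
  case Nil
  show ?case by (intro exI[of _ s] exI[of _ t] exI[of _ 0]) (simp add: zero_enat_def[symmetric])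
next
  case (Cons c z)
  then obtain a b k where ab: "{a, b} = {s, t}" "enat k \<le> m s t" "eqv z (alt_word a b k)" by auto
  have "(a = s \<and> b = t) \<or> (a = t \<and> b = s)" using ab(1) by (simp add: doubleton_eq_iff)
  moreover have "c \<in> {s, t}" using Cons.hyps by simp
  ultimately have "a \<in> S" "b \<in> S" "a \<noteq> b" "m a b = m s t" "c \<in> {a, b}"
    using st m_sym by auto
  then obtain a' b' k' where "{a', b'} = {a, b}" "enat k' \<le> m s t" "eqv (c # alt_word a b k) (alt_word a' b' k')"
    using eqv_cons_alt_word[of a b k c] ab(2) by auto
  moreover have "eqv (c # z) (c # alt_word a b k)"
    using eqv_append_cong[OF ab(3), of "[c]" "[]"] by simp
  ultimately show ?case using ab(1) by (blast intro: eqv_trans)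
qed

text \<open>\<open>x\<close> has minimal length in its coset \<open>x W\<^sub>T\<close>.\<close>
definition min_coset_word :: "'a set \<Rightarrow> 'a list \<Rightarrow> bool" where
  "min_coset_word T x \<longleftrightarrow>
    (\<forall>x' z. x' \<in> lists S \<longrightarrow> z \<in> lists T \<longrightarrow> eqv x (x' @ z) \<longrightarrow> length x \<le> length x')"

lemma min_coset_wordD:
  "min_coset_word T x \<Longrightarrow> x' \<in> lists S \<Longrightarrow> z \<in> lists T \<Longrightarrow> eqv x (x' @ z) \<Longrightarrow> length x \<le> length x'"
  unfolding min_coset_word_def by blast

lemma exists_min_coset_word:
  assumes "v \<in> lists S"
  shows "\<exists>x z. x \<in> lists S \<and> z \<in> lists T \<and> eqv v (x @ z) \<and> min_coset_word T x"
proof -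
  define P where "P x \<longleftrightarrow> x \<in> lists S \<and> (\<exists>z \<in> lists T. eqv v (x @ z))" for x
  have "P v" unfolding P_def using assms by (intro conjI bexI[of _ "[]"]) auto
  then obtain x where Px: "P x" and min: "\<And>x'. P x' \<Longrightarrow> length x \<le> length x'"
    using ex_has_least_nat[of P v length] by blast
  then obtain z where x: "x \<in> lists S" "z \<in> lists T" "eqv v (x @ z)" unfolding P_def by blast
  have "min_coset_word T x" unfolding min_coset_word_def
  proof (intro allI impI)
    fix x' z' assume "x' \<in> lists S" "z' \<in> lists T" "eqv x (x' @ z')"
    moreover from this have "eqv v (x' @ z' @ z)"
      using x(3) eqv_append[OF _ eqv_refl, of x "x' @ z'" z] by (simp add: eqv_trans)
    moreover have "z' @ z \<in> lists T" using \<open>z' \<in> lists T\<close> x(2) by simp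
    ultimately have "P x'" unfolding P_def by blast
    then show "length x \<le> length x'" by (rule min)
  qed
  then show ?thesis using x by blast
qed

lemma reduced_min_coset_word_append_alt_word:
  assumes x: "x \<in> lists S" "min_coset_word {a, b} x"
    and ab: "a \<in> S" "b \<in> S" "a \<noteq> b" and k: "enat k \<le> m a b"
  shows "reduced (x @ alt_word a b k)"
  using k
proof (induction k)
  case 0
  have "length x \<le> length u" if "eqv x u" for u
    using min_coset_wordD[OF x(2) eqv_lists[OF that x(1)], of "[]"] that by simp
  then show ?case by (simp add: reduced_def)
next
  case (Suc k)
  define e where "e = (if even k then a else b)"
  let ?w = "x @ alt_word a b k"
  have "enat k \<le> m a b" using Suc.prems order_trans[of "enat k" "enat (Suc k)"] by simp
  then have IH: "reduced ?w" by (rule Suc.IH)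
  have e: "e \<in> S" "e \<in> {a, b}" using ab by (auto simp: e_def)
  have alt: "alt_word a b k \<in> lists {a, b}" "alt_word a b k \<in> lists S"
    using ab by (simp_all add: alt_word_in_lists)
  have snoc: "x @ alt_word a b (Suc k) = ?w @ [e]" unfolding alt_word_Suc_snoc e_def by simp
  show ?case
  proof (rule ccontr)
    assume "\<not> reduced (x @ alt_word a b (Suc k))"
    then have "\<not> reduced (?w @ [e])" unfolding snoc .
    moreover have "?w \<in> lists S" using x alt by simp
    ultimately obtain i where i: "i < length ?w" and del: "eqv (?w @ [e]) (take i ?w @ drop (Suc i) ?w)"
      using exchange_condition[of ?w e] e IH by blast
    show False
    proof (cases "i < length x")
      case True
      define x' where "x' = take i x @ drop (Suc i) x"
      have x': "x' \<in> lists S" using x by (auto simp: x'_def dest: in_set_takeD in_set_dropD)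
      have "eqv (x @ (alt_word a b k @ [e])) (x' @ alt_word a b k)"
        using del True by (simp add: x'_def)
      then have "eqv x ((x' @ alt_word a b k) @ rev (alt_word a b k @ [e]))"
        by (rule eqv_move_right[rotated]) (use alt e in simp)
      then have eq: "eqv x (x' @ (alt_word a b k @ rev (alt_word a b k @ [e])))" by simp
      have "alt_word a b k @ rev (alt_word a b k @ [e]) \<in> lists {a, b}"
        using alt e by (auto simp: in_lists_conv_set)
      from min_coset_wordD[OF x(2) x' this eq] have "length x \<le> length x'" .
      then show False using True by (simp add: x'_def)
    next
      case False
      define j where "j = i - length x"
      have "j < k" using i False by (simp add: j_def)
      have "take i ?w @ drop (Suc i) ?w = x @ take j (alt_word a b k) @ drop (Suc j) (alt_word a b k)"
        using False by (simp add: j_def Suc_diff_le)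
      with del have "eqv (x @ alt_word a b (Suc k)) (x @ take j (alt_word a b k) @ drop (Suc j) (alt_word a b k))"
        unfolding snoc by simp
      then have "eqv (alt_word a b (Suc k)) (take j (alt_word a b k) @ drop (Suc j) (alt_word a b k))"
        using eqv_cancel_left x(1) by blast
      moreover have "reduced (alt_word a b (Suc k))" using reduced_alt_word ab Suc.prems by blast
      ultimately have "Suc k \<le> length (take j (alt_word a b k) @ drop (Suc j) (alt_word a b k))"
        unfolding reduced_def by (metis length_alt_word)
      then show False using \<open>j < k\<close> by simp
    qed
  qed
qed

text \<open>Up to the relations, \<open>v\<close> ends in the longest element of the dihedral group \<open>\<langle>s, r\<rangle>\<close>,
  which is therefore finite.\<close>
lemma two_right_descents:
  assumes v: "v \<in> lists S" "reduced v" and sr: "s \<in> S" "r \<in> S" "s \<noteq> r"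
    and desc: "\<not> reduced (v @ [s])" "\<not> reduced (v @ [r])"
  shows "\<exists>k y. m s r = enat k \<and> eqv v (y @ alt_word s r k) \<and> eqv v (y @ alt_word r s k)
    \<and> length y + k = length v"
proof -
  obtain x z where x: "x \<in> lists S" "min_coset_word {s, r} x" and z: "z \<in> lists {s, r}" "eqv v (x @ z)"
    using exists_min_coset_word[OF v(1)] by blast
  obtain a b k where ab: "{a, b} = {s, r}" and k: "enat k \<le> m s r" and "eqv z (alt_word a b k)"
    using eqv_alt_word_if_lists_pair[OF sr z(1)] by blast
  then have v_eqv: "eqv v (x @ alt_word a b k)"
    using z(2) eqv_append_cong[of z _ x "[]"] by (auto intro: eqv_trans)
  have "(a = s \<and> b = r) \<or> (a = r \<and> b = s)" using ab by (simp add: doubleton_eq_iff)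
  then have ab': "a \<in> S" "b \<in> S" "a \<noteq> b" "m a b = m s r" using sr m_sym by auto
  note reduced_append = reduced_min_coset_word_append_alt_word[OF x(1) _ ab'(1-3)]
  have "length (x @ alt_word a b k) = length v"
    using reduced_eqv_length[OF v(2) reduced_append v_eqv] x(2) ab k ab'(4) by simp
  have "\<not> enat (Suc k) \<le> m s r"
  proof
    assume "enat (Suc k) \<le> m s r"
    then have "reduced (x @ alt_word a b (Suc k))" using reduced_append x(2) ab ab'(4)
      by (simp del: alt_word.simps)
    moreover have "eqv (x @ alt_word a b (Suc k)) (v @ [if even k then a else b])"
      using eqv_append[OF eqv_sym[OF v_eqv] eqv_refl] unfolding alt_word_Suc_snoc by simp
    ultimately have "reduced (v @ [if even k then a else b])"
      using reduced_eqv \<open>length (x @ alt_word a b k) = length v\<close> by fastforce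
    then show False using desc ab by (auto simp: doubleton_eq_iff split: if_splits)
  qed
  then have mk: "m s r = enat k" using k by (cases "m s r") auto
  have braid: "eqv (x @ alt_word s r k) (x @ alt_word r s k)"
    using eqv_append_cong[OF eqv_braid[OF sr(1,2) mk], of x "[]"] by simp
  have "eqv v (x @ alt_word s r k) \<and> eqv v (x @ alt_word r s k)"
    using \<open>(a = s \<and> b = r) \<or> (a = r \<and> b = s)\<close>
  proof
    assume "a = s \<and> b = r"
    then have "eqv v (x @ alt_word s r k)" using v_eqv by simp
    then show ?thesis using eqv_trans[OF _ braid] by blast
  next
    assume "a = r \<and> b = s"
    then have "eqv v (x @ alt_word r s k)" using v_eqv by simp
    then show ?thesis using eqv_trans[OF _ eqv_sym[OF braid]] by blast
  qed
  then show ?thesis using mk \<open>length (x @ alt_word a b k) = length v\<close> by auto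
qed

section \<open>Fully commutative elements\<close>

abbreviation comm_eqv :: "'a list \<Rightarrow> 'a list \<Rightarrow> bool" where
  "comm_eqv \<equiv> equivclp (comm_move m)"

lemma comm_eqv_append_cong: "comm_eqv u v \<Longrightarrow> comm_eqv (p @ u @ q) (p @ v @ q)"
proof (erule equivclp_map)
  fix u v assume "comm_move m u v"
  then show "comm_move m (p @ u @ q) (p @ v @ q)"
    unfolding comm_move_def by (metis append.assoc)
qed

lemma comm_eqv_snoc: "comm_eqv u v \<Longrightarrow> comm_eqv (u @ q) (v @ q)"
  using comm_eqv_append_cong[of u v "[]" q] by simp

lemma comm_eqv_length: "comm_eqv u v \<Longrightarrow> length u = length v"
  by (erule equivclp_invariant) (auto simp: comm_move_def)

lemma comm_eqv_set: "comm_eqv u v \<Longrightarrow> set u = set v"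
  by (erule equivclp_invariant) (auto simp: comm_move_def)

lemma comm_move_swap: "u \<in> lists S \<Longrightarrow> comm_move m u v \<Longrightarrow> comm_move m v u"
  unfolding comm_move_def using m_sym by fastforce

lemma comm_move_eqv: "u \<in> lists S \<Longrightarrow> comm_move m u v \<Longrightarrow> eqv u v"
  unfolding comm_move_def
  using eqv_braid[of _ _ 2] eqv_append_cong by (fastforce simp: numeral_eq_enat numeral_2_eq_2)

lemma comm_eqv_imp_comm_moves: "comm_eqv u v \<Longrightarrow> u \<in> lists S \<Longrightarrow> (comm_move m)\<^sup>*\<^sup>* u v"
proof (induction rule: equivclp_induct)
  case (step y z)
  have "comm_eqv u z" using step(1,2) by (rule equivclp_into_equivclp)
  then have "z \<in> lists S" using comm_eqv_set step(4) by (metis in_lists_conv_set)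
  then have "comm_move m y z" using step(2) comm_move_swap by blast
  with step show ?case by (meson rtranclp.rtrancl_into_rtrancl)
qed simp

lemma comm_eqv_imp_eqv:
  assumes "comm_eqv u v" "u \<in> lists S"
  shows "eqv u v"
  using comm_eqv_imp_comm_moves[OF assms]
proof (induction rule: rtranclp_induct)
  case (step y z)
  have "y \<in> lists S"
    using assms(2) comm_eqv_set[OF rtranclp_into_equivclp[OF step(1)]]
    by (simp add: in_lists_conv_set)
  then show ?case using step comm_move_eqv by (blast intro: eqv_trans)
qed simp

definition has_forbidden_factor :: "'a list \<Rightarrow> bool" where
  "has_forbidden_factor u \<longleftrightarrow> (\<exists>x y a. u = x @ [a, a] @ y)
     \<or> (\<exists>x y a b k. a \<noteq> b \<and> m a b = enat k \<and> 3 \<le> k \<and> u = x @ alt_word a b k @ y)"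

definition fc_word :: "'a list \<Rightarrow> bool" where
  "fc_word w \<longleftrightarrow> (\<forall>u. comm_eqv w u \<longrightarrow> \<not> has_forbidden_factor u)"

lemma has_forbidden_factor_append: "has_forbidden_factor u \<Longrightarrow> has_forbidden_factor (u @ q)"
  unfolding has_forbidden_factor_def by (metis append.assoc)

lemma fc_word_prefix: "fc_word (w @ q) \<Longrightarrow> fc_word w"
  unfolding fc_word_def using comm_eqv_snoc has_forbidden_factor_append by blast

lemma fc_word_comm_eqv: "fc_word w \<Longrightarrow> comm_eqv w w' \<Longrightarrow> fc_word w'"
  unfolding fc_word_def by (meson equivclp_trans)

lemma not_fc_word_if_forbidden: "has_forbidden_factor u \<Longrightarrow> \<not> fc_word u"
  unfolding fc_word_def by (meson equivclp_refl)

lemma not_fc_word_snoc_snoc: "\<not> fc_word (w @ [a, a])"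
  by (rule not_fc_word_if_forbidden) (unfold has_forbidden_factor_def, blast)

lemma fc_word_braid_factor_length:
  assumes "fc_word v" "comm_eqv v (y @ alt_word a b k)" "a \<noteq> b" "m a b = enat k"
  shows "k \<le> 2"
proof (rule ccontr)
  assume "\<not> k \<le> 2"
  then have "has_forbidden_factor (y @ alt_word a b k)"
    unfolding has_forbidden_factor_def using assms(3,4)
    by (intro disjI2 exI[of _ y] exI[of _ "[]"] exI[of _ a] exI[of _ b] exI[of _ k]) simp
  then show False using assms(1,2) unfolding fc_word_def by blast
qed

text \<open>The induction step of \<open>fc_word_reduced_comm_eqv\<close>, from length \<open>n\<close> to \<open>n + 1\<close>.\<close>
context
  fixes n :: nat
  assumes IH: "\<And>w u. w \<in> lists S \<Longrightarrow> length w = n \<Longrightarrow> fc_word w \<Longrightarrow>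
    reduced w \<and> (eqv w u \<longrightarrow> length u = n \<longrightarrow> comm_eqv w u)"
begin

lemma fc_word_snoc_reduced:
  assumes v: "v \<in> lists S" "length v = n" and s: "s \<in> S" and fc: "fc_word (v @ [s])"
  shows "reduced (v @ [s])"
proof (rule ccontr)
  note IH_v = IH[OF v fc_word_prefix[OF fc]]
  assume "\<not> reduced (v @ [s])"
  then obtain d where d: "eqv (v @ [s]) d" "length d < Suc n"
    using v unfolding reduced_def by fastforce
  have "length d \<noteq> n" using eqv_even_length[OF d(1)] v by auto
  have v_d: "eqv v (d @ [s])" using eqv_move_right[of "[s]"] d(1) s by simp
  moreover have "reduced v" using IH_v by blast
  ultimately have "n \<le> length (d @ [s])" using v(2) unfolding reduced_def by blast
  with d(2) \<open>length d \<noteq> n\<close> have "length (d @ [s]) = n" by simp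
  then have "comm_eqv v (d @ [s])" using IH_v v_d by simp
  then have "comm_eqv (v @ [s]) (d @ [s, s])" using comm_eqv_snoc[of v "d @ [s]" "[s]"] by simp
  then have "fc_word (d @ [s, s])" by (rule fc_word_comm_eqv[OF fc])
  then show False using not_fc_word_snoc_snoc by simp
qed

lemma fc_word_snoc_comm_eqv:
  assumes v: "v \<in> lists S" "length v = n" and s: "s \<in> S" and fc: "fc_word (v @ [s])"
    and u: "eqv (v @ [s]) (u @ [r])" "length u = n"
  shows "comm_eqv (v @ [s]) (u @ [r])"
proof (cases "r = s")
  case True
  then have "eqv v u" using u(1) eqv_cancel_right[of "[s]"] s by simp
  then have "comm_eqv v u" using IH[OF v fc_word_prefix[OF fc]] u(2) by blast
  then show ?thesis using comm_eqv_snoc True by blast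
next
  case False
  have r: "r \<in> S" using eqv_lists[OF u(1)] v s by simp
  have red: "reduced (v @ [s])" using fc_word_snoc_reduced[OF v s fc] .
  have "\<not> reduced ((v @ [s]) @ [s])" "\<not> reduced ((v @ [s]) @ [r])"
    using not_reduced_snoc_eqv_snoc[OF s, of "v @ [s]" v] not_reduced_snoc_eqv_snoc[OF r u(1)] v u(2)
    by simp_all
  then obtain k y where k: "m s r = enat k" and y: "eqv (v @ [s]) (y @ alt_word s r k)"
      "eqv (v @ [s]) (y @ alt_word r s k)" "length y + k = Suc n"
    using two_right_descents[OF _ red s r \<open>r \<noteq> s\<close>[symmetric]] v s by auto
  have "2 \<le> k" using m_ge_2[OF s r] False k by (simp add: numeral_eq_enat)
  then obtain k' where k': "k = Suc k'" by (cases k) auto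
  define a b where "a = (if even k' then s else r)" and "b = (if even k' then r else s)"
  have ab: "a \<noteq> b" "m a b = enat k" "{a, b} = {s, r}"
    using False k m_sym[OF s r] by (auto simp: a_def b_def)
  have q: "alt_word a b k = alt_word a b k' @ [s]"
    unfolding k' alt_word_Suc_snoc by (simp add: a_def b_def)
  have v_eqv: "eqv (v @ [s]) (y @ alt_word a b k)" using y by (simp add: a_def b_def)
  then have "eqv v (y @ alt_word a b k')"
    using eqv_cancel_right[of "[s]" v "y @ alt_word a b k'"] s q by simp
  moreover have "length (y @ alt_word a b k') = n" using y(3) k' by simp
  ultimately have "comm_eqv v (y @ alt_word a b k')"
    using IH[OF v fc_word_prefix[OF fc]] by blast
  then have to_braid: "comm_eqv (v @ [s]) (y @ alt_word a b k)"
    using comm_eqv_snoc q by fastforce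
  then have "k = 2" using fc_word_braid_factor_length[OF fc _ ab(1,2)] \<open>2 \<le> k\<close> by simp
  then have "a = r" "b = s" by (simp_all add: a_def b_def k')
  then have "comm_eqv (v @ [s]) (y @ [r, s])" using to_braid \<open>k = 2\<close> by (simp add: numeral_2_eq_2)
  moreover have "comm_move m (y @ [r, s] @ []) (y @ [s, r] @ [])"
    unfolding comm_move_def using ab \<open>a = r\<close> \<open>b = s\<close> \<open>k = 2\<close> by (auto simp: numeral_eq_enat)
  ultimately have to_sr: "comm_eqv (v @ [s]) (y @ [s] @ [r])"
    by (simp add: equivclp_into_equivclp)
  have fc_ys: "fc_word (y @ [s])"
    using fc_word_comm_eqv[OF fc to_sr] fc_word_prefix[of "y @ [s]" "[r]"] by simp
  have "eqv (y @ [s]) u"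
  proof -
    have "eqv (y @ [s] @ [r]) (u @ [r])"
      using eqv_trans[OF eqv_sym[OF comm_eqv_imp_eqv[OF to_sr]] u(1)] v s by simp
    then show ?thesis using eqv_cancel_right[of "[r]" "y @ [s]" u] r by simp
  qed
  moreover have "y @ [s] \<in> lists S" using eqv_lists[OF v_eqv] v s by simp
  moreover have "length (y @ [s]) = n" using y(3) \<open>k = 2\<close> by simp
  ultimately have "comm_eqv (y @ [s]) u" using IH[OF _ _ fc_ys] u(2) by blast
  then show ?thesis using to_sr comm_eqv_snoc[of "y @ [s]" u "[r]"] by (simp add: equivclp_trans)
qed

end

theorem fc_word_reduced_comm_eqv:
  assumes "w \<in> lists S" "fc_word w"
  shows "reduced w \<and> (\<forall>u. eqv w u \<longrightarrow> length u = length w \<longrightarrow> comm_eqv w u)"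
proof -
  have "\<forall>w u. w \<in> lists S \<longrightarrow> length w = n \<longrightarrow> fc_word w \<longrightarrow>
      reduced w \<and> (eqv w u \<longrightarrow> length u = n \<longrightarrow> comm_eqv w u)" for n
  proof (induction n)
    case 0
    show ?case by (simp add: reduced_def)
  next
    case (Suc n)
    note IH = Suc.IH[rule_format]
    show ?case
    proof (intro allI impI conjI)
      fix w u assume w: "w \<in> lists S" "length w = Suc n" "fc_word w"
      then obtain v s where ws: "w = v @ [s]" by (cases w rule: rev_exhaust) auto
      have v: "v \<in> lists S" "length v = n" and s: "s \<in> S" and fc: "fc_word (v @ [s])"
        using w ws by auto
      show "reduced w" using fc_word_snoc_reduced[OF IH v s fc] ws by simp
      assume "eqv w u" "length u = Suc n"
      then obtain u' r where "u = u' @ [r]" "length u' = n"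
        by (cases u rule: rev_exhaust) auto
      then show "comm_eqv w u"
        using fc_word_snoc_comm_eqv[OF IH v s fc] \<open>eqv w u\<close> ws by simp
    qed
  qed
  then show ?thesis using assms by blast
qed

lemma mem_reduced_exprs_iff:
  assumes "w \<in> lists S"
  shows "v \<in> reduced_exprs (elem w) \<longleftrightarrow> eqv w v \<and> reduced v"
proof
  assume v: "v \<in> reduced_exprs (elem w)"
  then have "eqv w v" and len: "length v = cox_length (elem w)"
    unfolding reduced_exprs_def cox_elem_def by auto
  moreover have "length v \<le> length u" if "eqv v u" for u
  proof -
    have "u \<in> elem w" using \<open>eqv w v\<close> that eqv_trans unfolding cox_elem_def by blast
    then show ?thesis unfolding len cox_length_def by (intro Least_le) blast
  qed
  ultimately show "eqv w v \<and> reduced v" unfolding reduced_def by blast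
next
  assume v: "eqv w v \<and> reduced v"
  have "cox_length (elem w) = length v" unfolding cox_length_def
  proof (rule Least_equality)
    show "\<exists>u\<in>elem w. length u = length v" using v unfolding cox_elem_def by blast
  next
    fix n assume "\<exists>u\<in>elem w. length u = n"
    then obtain u where "eqv w u" "length u = n" unfolding cox_elem_def by blast
    then show "length v \<le> n" using v eqv_trans eqv_sym unfolding reduced_def by blast
  qed
  then show "v \<in> reduced_exprs (elem w)" using v unfolding reduced_exprs_def cox_elem_def by simp
qed

lemma reduced_exprs_nonempty: "\<exists>v. v \<in> reduced_exprs (elem w)"
proof -
  have "w \<in> elem w" by (simp add: cox_elem_def)
  then have "\<exists>n. \<exists>v\<in>elem w. length v = n" by blast
  then have "\<exists>v\<in>elem w. length v = cox_length (elem w)" unfolding cox_length_def by (rule LeastI_ex)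
  then show ?thesis unfolding reduced_exprs_def by blast
qed

lemma cox_length_reduced: "w \<in> lists S \<Longrightarrow> reduced w \<Longrightarrow> cox_length (elem w) = length w"
  using mem_reduced_exprs_iff[of w w] unfolding reduced_exprs_def by simp

lemma finite_fc_elements: "finite (fc_elements S m l)"
proof -
  have "fc_elements S m l \<subseteq> elem ` {w. set w \<subseteq> S \<and> length w = l}"
  proof
    fix X assume "X \<in> fc_elements S m l"
    then obtain w where w: "w \<in> lists S" "X = elem w" "cox_length X = l"
      unfolding fc_elements_def coxeter_group_def by auto
    obtain v where v: "v \<in> reduced_exprs (elem w)" using reduced_exprs_nonempty by blast
    then have "eqv w v" using mem_reduced_exprs_iff[OF w(1)] by blast
    then have "v \<in> {w. set w \<subseteq> S \<and> length w = l}"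
      using eqv_lists[OF _ w(1)] v w(2,3) by (auto simp: reduced_exprs_def in_lists_conv_set)
    moreover have "X = elem v" using w(2) \<open>eqv w v\<close> elem_eq_iff by blast
    ultimately show "X \<in> elem ` {w. set w \<subseteq> S \<and> length w = l}" by (rule rev_image_eqI)
  qed
  then show ?thesis by (rule finite_surj[OF finite_lists_length_eq[OF finite_S]])
qed

lemma filter_pair_comm_moves:
  assumes ab: "a \<in> S" "b \<in> S" "m a b \<noteq> 2" and moves: "(comm_move m)\<^sup>*\<^sup>* u v"
  shows "filter (\<lambda>c. c = a \<or> c = b) u = filter (\<lambda>c. c = a \<or> c = b) v"
  using moves
proof (induction rule: rtranclp_induct)
  case (step v w)
  then obtain x y s t where st: "m s t = 2" "v = x @ [s, t] @ y" "w = x @ [t, s] @ y"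
    unfolding comm_move_def by blast
  have "\<not> ((s = a \<or> s = b) \<and> (t = a \<or> t = b))" if "s \<noteq> t"
    using st(1) ab m_sym that by auto
  then have swap: "filter (\<lambda>c. c = a \<or> c = b) [s, t] = filter (\<lambda>c. c = a \<or> c = b) [t, s]"
    by auto
  have "filter (\<lambda>c. c = a \<or> c = b) v = filter (\<lambda>c. c = a \<or> c = b) w"
    unfolding st(2,3) filter_append swap by (rule refl)
  then show ?case using step.IH by simp
qed simp

lemma fc_word_if_fully_commutative:
  assumes w: "w \<in> lists S" "reduced w" and fc: "fully_commutative m (elem w)"
  shows "fc_word w"
  unfolding fc_word_def
proof (intro allI impI notI)
  fix u assume comm: "comm_eqv w u" and forbidden: "has_forbidden_factor u"
  have u: "eqv w u" "u \<in> lists S" "reduced u"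
    using comm_eqv_imp_eqv[OF comm w(1)] eqv_lists comm_eqv_length[OF comm] reduced_eqv[OF w(2)] w(1)
    by auto
  then have u_red: "u \<in> reduced_exprs (elem w)" using mem_reduced_exprs_iff[OF w(1)] by blast
  from forbidden consider (square) x y a where "u = x @ [a, a] @ y"
    | (braid) x y a b k where "a \<noteq> b" "m a b = enat k" "3 \<le> k" "u = x @ alt_word a b k @ y"
    unfolding has_forbidden_factor_def by blast
  then show False
  proof cases
    case square
    then have "eqv u (x @ [] @ y)" using eqv_append_cong[OF eqv_double] u(2) by simp
    then show False using u(3) square unfolding reduced_def by fastforce
  next
    case braid
    then obtain k' where k': "k = Suc (Suc k')" by (intro that[of "k - 2"]) simp
    then have ab: "a \<in> S" "b \<in> S" using u(2) braid(4) by auto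
    define u' where "u' = x @ alt_word b a k @ y"
    have "eqv u u'" unfolding u'_def braid(4) using eqv_append_cong[OF eqv_braid[OF ab braid(2)]] .
    then have "u' \<in> reduced_exprs (elem w)"
      using mem_reduced_exprs_iff[OF w(1)] u reduced_eqv[OF u(3)] eqv_trans
      by (simp add: u'_def braid(4))
    then have "(comm_move m)\<^sup>*\<^sup>* u u'" using fc u_red unfolding fully_commutative_def by blast
    then have "filter (\<lambda>c. c = a \<or> c = b) u = filter (\<lambda>c. c = a \<or> c = b) u'"
      using filter_pair_comm_moves ab braid(2,3) by (simp add: numeral_eq_enat)
    then have "alt_word a b k = alt_word b a k"
      using alt_word_filter_pair[of a b k] alt_word_filter_pair[of b a k]
      by (simp add: u'_def braid(4) disj_commute)
    then show False using k' braid(1) by simp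
  qed
qed

lemma fully_commutative_if_fc_word:
  assumes w: "w \<in> lists S" and fc: "fc_word w"
  shows "fully_commutative m (elem w)"
  unfolding fully_commutative_def
proof (intro ballI)
  note main = fc_word_reduced_comm_eqv[OF w fc]
  have comm: "comm_eqv w v" if "v \<in> reduced_exprs (elem w)" for v
    using that main reduced_eqv_length mem_reduced_exprs_iff[OF w] by blast
  fix u v assume "u \<in> reduced_exprs (elem w)" "v \<in> reduced_exprs (elem w)"
  then have "comm_eqv u v" using comm by (blast intro: equivclp_trans equivclp_sym)
  moreover have "u \<in> lists S"
    using \<open>u \<in> reduced_exprs (elem w)\<close> mem_reduced_exprs_iff[OF w] eqv_lists w by blast
  ultimately show "(comm_move m)\<^sup>*\<^sup>* u v" by (rule comm_eqv_imp_comm_moves)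
qed

lemma not_fc_word_long_alt_factor:
  assumes ab: "a \<in> S" "b \<in> S" "a \<noteq> b" and k: "m a b \<le> enat k" "3 \<le> k"
  shows "\<not> fc_word (x @ alt_word a b k @ y)"
proof -
  obtain j where j: "m a b = enat j" "2 \<le> j" "j \<le> k"
    using k m_ge_2[OF ab] by (cases "m a b") (auto simp: numeral_eq_enat)
  show ?thesis
  proof (cases "j = 2")
    case True
    obtain k' where k': "k = Suc (Suc (Suc k'))" using k(2) by (intro that[of "k - 3"]) simp
    have "comm_move m (x @ [a, b] @ (a # alt_word b a k' @ y)) (x @ [b, a] @ (a # alt_word b a k' @ y))"
      unfolding comm_move_def using j True by (simp add: numeral_eq_enat) blast
    moreover have "x @ alt_word a b k @ y = x @ [a, b] @ (a # alt_word b a k' @ y)"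
      by (simp add: k')
    moreover have "x @ [b, a] @ (a # alt_word b a k' @ y) = (x @ [b]) @ [a, a] @ (alt_word b a k' @ y)"
      by simp
    ultimately have "comm_eqv (x @ alt_word a b k @ y) ((x @ [b]) @ [a, a] @ (alt_word b a k' @ y))"
      by (metis r_into_equivclp)
    moreover have "\<not> fc_word ((x @ [b]) @ [a, a] @ (alt_word b a k' @ y))"
      by (rule not_fc_word_if_forbidden) (unfold has_forbidden_factor_def, blast)
    ultimately show ?thesis using fc_word_comm_eqv by blast
  next
    case False
    define c d where "c = (if even j then a else b)" and "d = (if even j then b else a)"
    have "x @ alt_word a b k @ y = x @ alt_word a b j @ (alt_word c d (k - j) @ y)"
      using alt_word_add[of a b j "k - j"] j by (simp add: c_def d_def)
    moreover have "has_forbidden_factor (x @ alt_word a b j @ (alt_word c d (k - j) @ y))"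
      unfolding has_forbidden_factor_def using j False ab(3)
      by (intro disjI2 exI[of _ x] exI[of _ "alt_word c d (k - j) @ y"] exI[of _ a] exI[of _ b] exI[of _ j]) simp
    ultimately show ?thesis using not_fc_word_if_forbidden by simp
  qed
qed

end

section \<open>Transfer along an embedding of Coxeter matrices\<close>

locale coxeter_embedding =
  c1: coxeter_system S1 m1 + c2: coxeter_system S2 m2
  for S1 :: "'a set" and m1 and S2 :: "'b set" and m2 +
  fixes \<phi> :: "'a \<Rightarrow> 'b"
  assumes inj: "inj_on \<phi> S1" and maps_to: "\<phi> ` S1 \<subseteq> S2"
    and m_mono: "\<forall>s\<in>S1. \<forall>t\<in>S1. s \<noteq> t \<longrightarrow> m1 s t \<le> m2 (\<phi> s) (\<phi> t)"
begin

lemma map_in_lists: "w \<in> lists S1 \<Longrightarrow> map \<phi> w \<in> lists S2"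
  using maps_to by (auto simp: image_subset_iff)

lemma comm_move_lift:
  assumes u: "u \<in> lists S1" and move: "comm_move m2 (map \<phi> u) u'"
  shows "\<exists>u2. u' = map \<phi> u2 \<and> comm_move m1 u u2"
proof -
  obtain x' y' s' t' where st': "m2 s' t' = 2" "map \<phi> u = x' @ [s', t'] @ y'" "u' = x' @ [t', s'] @ y'"
    using move unfolding comm_move_def by blast
  then obtain x s t y where u_eq: "u = x @ [s, t] @ y" and
      im: "map \<phi> x = x'" "\<phi> s = s'" "\<phi> t = t'" "map \<phi> y = y'"
    by (auto simp: map_eq_append_conv map_eq_Cons_conv)
  have st: "s \<in> S1" "t \<in> S1" using u u_eq by auto
  have "s \<noteq> t" using st' im c2.m_diag[of "\<phi> s"] maps_to st by auto
  then have "m1 s t = 2"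
    using c1.m_ge_2[OF st] m_mono st st'(1) im by (metis order_antisym)
  then have "comm_move m1 u (x @ [t, s] @ y)" unfolding comm_move_def u_eq by blast
  moreover have "u' = map \<phi> (x @ [t, s] @ y)" using st' im by simp
  ultimately show ?thesis by blast
qed

lemma comm_eqv_lift:
  assumes "c2.comm_eqv (map \<phi> w) u'" and w: "w \<in> lists S1"
  shows "\<exists>u. u' = map \<phi> u \<and> c1.comm_eqv w u"
  using assms(1)
proof (induction rule: equivclp_induct)
  case (step y z)
  then obtain u where u: "y = map \<phi> u" "c1.comm_eqv w u" by blast
  have "u \<in> lists S1" using w c1.comm_eqv_set[OF u(2)] by (simp add: in_lists_conv_set)
  moreover have "comm_move m2 (map \<phi> u) z"
  proof -
    have "z \<in> lists S2 \<Longrightarrow> comm_move m2 z (map \<phi> u) \<Longrightarrow> comm_move m2 (map \<phi> u) z"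
      by (rule c2.comm_move_swap)
    moreover have "set z = set (map \<phi> u)" if "comm_move m2 z (map \<phi> u)"
      using c2.comm_eqv_set[OF r_into_equivclp[of "comm_move m2", OF that]] .
    ultimately show ?thesis
      using step(2) u(1) map_in_lists[OF \<open>u \<in> lists S1\<close>] by (auto simp: in_lists_conv_set)
  qed
  ultimately obtain u2 where "z = map \<phi> u2" "comm_move m1 u u2" using comm_move_lift by blast
  then show ?case using u(2) by (blast intro: equivclp_into_equivclp)
qed (blast intro: equivclp_refl)

lemma alt_word_factor_preimage:
  assumes u: "u \<in> lists S1" and eq: "map \<phi> u = x' @ alt_word a' b' k @ y'" and k: "2 \<le> k"
  shows "\<exists>x y a b. u = x @ alt_word a b k @ y \<and> \<phi> a = a' \<and> \<phi> b = b'"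
proof -
  obtain x r where "u = x @ r" "map \<phi> r = alt_word a' b' k @ y'"
    using eq map_eq_append_conv by metis
  moreover obtain z y where "r = z @ y" "map \<phi> z = alt_word a' b' k"
    using calculation(2) map_eq_append_conv by metis
  ultimately have u_eq: "u = x @ z @ y" and z: "map \<phi> z = alt_word a' b' k" by simp_all
  obtain k' where "k = Suc (Suc k')" using k by (intro that[of "k - 2"]) simp
  then obtain a b z' where z_eq: "z = a # b # z'" "\<phi> a = a'" "\<phi> b = b'"
    using z by (auto simp: map_eq_Cons_conv)
  have "z \<in> lists S1" using u u_eq by simp
  moreover have "alt_word a b k \<in> lists S1"
    using calculation z_eq(1) by (simp add: alt_word_in_lists)
  moreover have "map \<phi> z = map \<phi> (alt_word a b k)" using z z_eq by (simp add: map_alt_word)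
  ultimately have "z = alt_word a b k" using inj_onD[OF inj_on_map_lists[OF inj]] by blast
  then show ?thesis using u_eq z_eq by blast
qed

lemma fc_word_map:
  assumes w: "w \<in> lists S1" and fc: "c1.fc_word w"
  shows "c2.fc_word (map \<phi> w)"
  unfolding c2.fc_word_def
proof (intro allI impI notI)
  fix u' assume "c2.comm_eqv (map \<phi> w) u'" and forbidden: "c2.has_forbidden_factor u'"
  then obtain u where u: "u' = map \<phi> u" "c1.comm_eqv w u" using comm_eqv_lift w by blast
  have u_fc: "c1.fc_word u" using c1.fc_word_comm_eqv[OF fc u(2)] .
  have u_lists: "u \<in> lists S1" using w c1.comm_eqv_set[OF u(2)] by (simp add: in_lists_conv_set)
  from forbidden consider (square) x' y' a' where "u' = x' @ alt_word a' a' 2 @ y'"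
    | (braid) x' y' a' b' k where "a' \<noteq> b'" "m2 a' b' = enat k" "3 \<le> k" "u' = x' @ alt_word a' b' k @ y'"
    unfolding c2.has_forbidden_factor_def by (auto simp: numeral_2_eq_2)
  then show False
  proof cases
    case square
    then have "map \<phi> u = x' @ alt_word a' a' 2 @ y'" using u(1) by simp
    then obtain x y a b where "u = x @ alt_word a b 2 @ y" "\<phi> a = a'" "\<phi> b = a'"
      using alt_word_factor_preimage[OF u_lists _ order_refl] by blast
    moreover have "a \<in> S1" "b \<in> S1" using u_lists calculation(1) by (auto simp: numeral_2_eq_2)
    ultimately have "u = x @ [a, a] @ y" using inj by (auto simp: numeral_2_eq_2 dest: inj_onD)
    then show False using u_fc c1.not_fc_word_if_forbidden c1.has_forbidden_factor_def by blast
  next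
    case braid
    then have "map \<phi> u = x' @ alt_word a' b' k @ y'" "2 \<le> k" using u(1) by simp_all
    then obtain x y a b where ab: "u = x @ alt_word a b k @ y" "\<phi> a = a'" "\<phi> b = b'"
      using alt_word_factor_preimage[OF u_lists] by blast
    moreover obtain k' where "k = Suc (Suc k')" using braid(3) by (intro that[of "k - 2"]) simp
    then have "a \<in> S1" "b \<in> S1" using u_lists ab(1) by auto
    moreover have "a \<noteq> b" using braid(1) ab by auto
    moreover have "m1 a b \<le> enat k" using m_mono calculation braid(2) by fastforce
    ultimately show False
      using c1.not_fc_word_long_alt_factor[of a b k x y] braid(3) u_fc by blast
  qed
qed

definition fc_image :: "'a list set \<Rightarrow> 'b list set" where
  "fc_image X = c2.elem (map \<phi> (SOME v. v \<in> reduced_exprs X))"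

lemma fc_element_reduced_expr:
  assumes "X \<in> fc_elements S1 m1 l"
  defines "v \<equiv> SOME v. v \<in> reduced_exprs X"
  shows "v \<in> lists S1" "length v = l" "X = c1.elem v" "c1.fc_word v"
proof -
  obtain w where w: "w \<in> lists S1" "X = c1.elem w" "cox_length X = l" "fully_commutative m1 X"
    using assms(1) unfolding fc_elements_def coxeter_group_def by auto
  have "v \<in> reduced_exprs X" unfolding v_def w(2) using c1.reduced_exprs_nonempty by (rule someI_ex)
  then have v: "c1.eqv w v" "c1.reduced v" "length v = cox_length X"
    using c1.mem_reduced_exprs_iff[OF w(1)] w(2) unfolding reduced_exprs_def by auto
  show "v \<in> lists S1" using c1.eqv_lists[OF v(1) w(1)] .
  show "length v = l" using v(3) w(3) by simp
  show "X = c1.elem v" using w(2) v(1) c1.elem_eq_iff by simp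
  then show "c1.fc_word v"
    using c1.fc_word_if_fully_commutative[OF \<open>v \<in> lists S1\<close> v(2)] w(4) by simp
qed

lemma fc_image_mem:
  assumes X: "X \<in> fc_elements S1 m1 l"
  shows "fc_image X \<in> fc_elements S2 m2 l"
proof -
  define v where "v = (SOME v. v \<in> reduced_exprs X)"
  note v = fc_element_reduced_expr[OF X, folded v_def]
  have w: "map \<phi> v \<in> lists S2" "c2.fc_word (map \<phi> v)" using map_in_lists fc_word_map v by auto
  then have "c2.reduced (map \<phi> v)" "fully_commutative m2 (c2.elem (map \<phi> v))"
    using c2.fc_word_reduced_comm_eqv c2.fully_commutative_if_fc_word by blast+
  moreover have "c2.elem (map \<phi> v) \<in> coxeter_group S2 m2" unfolding coxeter_group_def
    using w by blast
  ultimately show ?thesis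
    using c2.cox_length_reduced[OF w(1)] v(2) unfolding fc_image_def v_def[symmetric] fc_elements_def
    by simp
qed

lemma inj_on_fc_image: "inj_on fc_image (fc_elements S1 m1 l)"
proof (rule inj_onI)
  fix X Y assume X: "X \<in> fc_elements S1 m1 l" and Y: "Y \<in> fc_elements S1 m1 l"
    and eq: "fc_image X = fc_image Y"
  define v w where "v = (SOME v. v \<in> reduced_exprs X)" and "w = (SOME v. v \<in> reduced_exprs Y)"
  note v = fc_element_reduced_expr[OF X, folded v_def] and w = fc_element_reduced_expr[OF Y, folded w_def]
  have "c2.eqv (map \<phi> v) (map \<phi> w)"
    using eq c2.elem_eq_iff unfolding fc_image_def v_def w_def by simp
  then have "c2.comm_eqv (map \<phi> v) (map \<phi> w)"
    using c2.fc_word_reduced_comm_eqv[OF map_in_lists fc_word_map] v w by simp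
  then obtain u where u: "map \<phi> w = map \<phi> u" "c1.comm_eqv v u" using comm_eqv_lift v(1) by blast
  have "u \<in> lists S1" using v(1) c1.comm_eqv_set[OF u(2)] by (simp add: in_lists_conv_set)
  then have "u = w" using inj_onD[OF inj_on_map_lists[OF inj]] u(1) w(1) by metis
  then have "c1.eqv v w" using c1.comm_eqv_imp_eqv u(2) v(1) by blast
  then show "X = Y" using v(3) w(3) c1.elem_eq_iff by simp
qed

lemma card_fc_elements_le: "card (fc_elements S1 m1 l) \<le> card (fc_elements S2 m2 l)"
  using card_inj_on_le[OF inj_on_fc_image _ c2.finite_fc_elements] fc_image_mem by blast

end

theorem lemma4p4:
  fixes S1 :: "'a set" and m1 :: "'a \<Rightarrow> 'a \<Rightarrow> enat"
    and S2 :: "'b set" and m2 :: "'b \<Rightarrow> 'b \<Rightarrow> enat"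
    and \<phi> :: "'a \<Rightarrow> 'b"
  assumes "coxeter_matrix S1 m1" and "coxeter_irreducible S1 m1"
    and "coxeter_matrix S2 m2" and "coxeter_irreducible S2 m2"
    and "inj_on \<phi> S1" and "\<phi> ` S1 \<subseteq> S2"
    and "\<forall>s\<in>S1. \<forall>t\<in>S1. s \<noteq> t \<longrightarrow> m1 s t \<le> m2 (\<phi> s) (\<phi> t)"
  shows "\<forall>l. card (fc_elements S1 m1 l) \<le> card (fc_elements S2 m2 l)"
proof -
  interpret coxeter_embedding S1 m1 S2 m2 \<phi>
    using assms by unfold_locales auto
  show ?thesis using card_fc_elements_le by blast
qed

end
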